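(* Let $H$ be a Hilbert space of finite dimension $m$ and $n\ge 1$ an integer. For a two-outcome POVM $\{\Pi_p,\Pi_m\}$ on $H^{\otimes n}$ (positive operators with $\Pi_p+\Pi_m=I$), define $$p(\mathrm{pure}|p)=\frac{\int_{\mu(\rho)=1}\eta(\rho)\,\mathrm{Tr}(\rho^{\otimes n}\Pi_p)\,d\rho}{\int_{\mu(\rho)\le 1}\eta(\rho)\,\mathrm{Tr}(\rho^{\otimes n}\Pi_p)\,d\rho},\qquad p(\mathrm{mixed}|m)=\frac{\int_{\mu(\rho)<1}\eta(\rho)\,\mathrm{Tr}(\rho^{\otimes n}\Pi_m)\,d\rho}{\int_{\mu(\rho)\le 1}\eta(\rho)\,\mathrm{Tr}(\rho^{\otimes n}\Pi_m)\,d\rho},$$ where the integrals range over density operators $\rho$ on $H$. Then the POVM $$\Pi_p=\Phi(H^{\otimes n}_{sym}),\qquad \Pi_m=\Phi(H^{\otimes n}_{asym})$$ is a maximum confidence discrimination between pure and mixed states: it maximizes $p(\mathrm{pure}|p)$ and $p(\mathrm{mixed}|m)$ simultaneously over all two-outcome POVMs on $H^{\otimes n}$.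
   Context: $H^{\otimes n}_{sym}$ denotes the symmetric subspace of $H^{\otimes n}$ (vectors invariant under all permutations of the $n$ tensor factors, equivalently the span of all $|\psi\rangle^{\otimes n}$, $|\psi\rangle\in H$), and $H^{\otimes n}_{asym}$ its orthogonal complement; $\Phi(K)$ is the orthogonal projector onto a subspace $K$. The purity function $\mu$ on density operators satisfies $\mu(U\rho U^\dagger)=\mu(\rho)$ for all unitaries $U$, $\mu(\rho)=1$ iff $\rho$ is pure (rank one), and $0\le\mu(\rho)<1$ otherwise. The prior is a nonnegative density $\eta$ with respect to a measure $d\rho$ on density operators on $H$, with $\eta(U\rho U^\dagger)=\eta(\rho)$ for all unitaries $U$ (the measure $d\rho$ being invariant under $\rho\mapsto U\rho U^\dagger$). The quotients are considered only when their denominators are nonzero. *)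

theory Defs
  imports "HOL-Analysis.Analysis" "HOL-Probability.Probability" "Jordan_Normal_Form.Matrix"
begin

unbundle no vec_syntax

text \<open>The Hilbert space H of dimension m is modelled as complex m-vectors; operators on H
  are complex m x m matrices.  H^(tensor n) is modelled as complex (m^n)-vectors, where
  an index i < m^n is identified with the tuple of its n base-m digits.\<close>

definition mtrace :: "complex mat \<Rightarrow> complex" where
  "mtrace A = (\<Sum>i<dim_row A. A $$ (i,i))"

definition adj :: "complex mat \<Rightarrow> complex mat" where
  "adj A = Matrix.mat (dim_col A) (dim_row A) (\<lambda>(i,j). cnj (A $$ (j,i)))"

definition cinner :: "complex vec \<Rightarrow> complex vec \<Rightarrow> complex" where
  "cinner v w = (\<Sum>i<dim_vec v. cnj (v $ i) * w $ i)"

definition positive_op :: "nat \<Rightarrow> complex mat \<Rightarrow> bool" where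
  "positive_op N A \<longleftrightarrow> A \<in> carrier_mat N N \<and>
     (\<forall>v \<in> carrier_vec N. Im (cinner v (A *\<^sub>v v)) = 0 \<and> Re (cinner v (A *\<^sub>v v)) \<ge> 0)"

definition density_ops :: "nat \<Rightarrow> complex mat set" where
  "density_ops m = {\<rho>. positive_op m \<rho> \<and> mtrace \<rho> = 1}"

definition unitary_mat :: "nat \<Rightarrow> complex mat \<Rightarrow> bool" where
  "unitary_mat m U \<longleftrightarrow> U \<in> carrier_mat m m \<and> adj U * U = 1\<^sub>m m"

definition rank_one :: "nat \<Rightarrow> complex mat \<Rightarrow> bool" where
  "rank_one m \<rho> \<longleftrightarrow> (\<exists>\<psi> \<in> carrier_vec m. \<psi> \<noteq> 0\<^sub>v m \<and>
     \<rho> = Matrix.mat m m (\<lambda>(i,j). \<psi> $ i * cnj (\<psi> $ j)))"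

definition digit :: "nat \<Rightarrow> nat \<Rightarrow> nat \<Rightarrow> nat" where
  "digit m k i = (i div m ^ k) mod m"

definition tensor_pow :: "nat \<Rightarrow> nat \<Rightarrow> complex mat \<Rightarrow> complex mat" where
  "tensor_pow m n A = Matrix.mat (m ^ n) (m ^ n)
     (\<lambda>(i,j). \<Prod>k<n. A $$ (digit m k i, digit m k j))"

text \<open>Index obtained by permuting the tensor factors by sigma.\<close>
definition perm_idx :: "nat \<Rightarrow> nat \<Rightarrow> (nat \<Rightarrow> nat) \<Rightarrow> nat \<Rightarrow> nat" where
  "perm_idx m n \<sigma> i = (\<Sum>k<n. digit m (\<sigma> k) i * m ^ k)"

definition sym_subspace :: "nat \<Rightarrow> nat \<Rightarrow> complex vec set" where
  "sym_subspace m n = {v \<in> carrier_vec (m ^ n).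
     \<forall>\<sigma>. \<sigma> permutes {..<n} \<longrightarrow> (\<forall>i < m ^ n. v $ (perm_idx m n \<sigma> i) = v $ i)}"

definition orth_compl :: "nat \<Rightarrow> complex vec set \<Rightarrow> complex vec set" where
  "orth_compl N K = {v \<in> carrier_vec N. \<forall>w \<in> K. cinner w v = 0}"

definition asym_subspace :: "nat \<Rightarrow> nat \<Rightarrow> complex vec set" where
  "asym_subspace m n = orth_compl (m ^ n) (sym_subspace m n)"

definition is_orth_proj :: "nat \<Rightarrow> complex vec set \<Rightarrow> complex mat \<Rightarrow> bool" where
  "is_orth_proj N K P \<longleftrightarrow> P \<in> carrier_mat N N \<and> P * P = P \<and> adj P = P \<and>
     (\<lambda>v. P *\<^sub>v v) ` carrier_vec N = K"

definition povm2 :: "nat \<Rightarrow> complex mat \<Rightarrow> complex mat \<Rightarrow> bool" where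
  "povm2 N Pp Pm \<longleftrightarrow> positive_op N Pp \<and> positive_op N Pm \<and> Pp + Pm = 1\<^sub>m N"

definition wint :: "complex mat measure \<Rightarrow> (complex mat \<Rightarrow> real) \<Rightarrow> nat \<Rightarrow> nat
     \<Rightarrow> complex mat set \<Rightarrow> complex mat \<Rightarrow> real" where
  "wint M \<eta> m n S Q = (\<integral>\<rho>. indicator S \<rho> * (\<eta> \<rho> * Re (mtrace (tensor_pow m n \<rho> * Q))) \<partial>M)"

definition p_pure_p :: "complex mat measure \<Rightarrow> (complex mat \<Rightarrow> real) \<Rightarrow> (complex mat \<Rightarrow> real)
     \<Rightarrow> nat \<Rightarrow> nat \<Rightarrow> complex mat \<Rightarrow> real" where
  "p_pure_p M \<eta> \<mu> m n Pp =
     wint M \<eta> m n {\<rho>. \<mu> \<rho> = 1} Pp / wint M \<eta> m n {\<rho>. \<mu> \<rho> \<le> 1} Pp"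

definition p_mixed_m :: "complex mat measure \<Rightarrow> (complex mat \<Rightarrow> real) \<Rightarrow> (complex mat \<Rightarrow> real)
     \<Rightarrow> nat \<Rightarrow> nat \<Rightarrow> complex mat \<Rightarrow> real" where
  "p_mixed_m M \<eta> \<mu> m n Pm =
     wint M \<eta> m n {\<rho>. \<mu> \<rho> < 1} Pm / wint M \<eta> m n {\<rho>. \<mu> \<rho> \<le> 1} Pm"

end

(*
  p(mixed|m): for a pure state rho = psi psi^dagger the operator rho^(tensor n) is the projector
  onto psi^(tensor n), a symmetric vector, so Pi_m sees no pure weight and p(mixed|m) = 1 for Pi_m.

  p(pure|p): each rho^(tensor n) is Hermitian and maps the symmetric subspace into itself, hence is
  block diagonal, and for Q >= 0
     Tr(rho^n Q) = Tr(rho^n Pi_p Q Pi_p) + Tr(rho^n Pi_m Q Pi_m) >= Tr(rho^n Pi_p Q Pi_p),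
  with equality when rho is pure. The map A |-> Tr(A^n Pi_p Q Pi_p) is a linear combination of the
  forms A |-> <u, A u>^n: the symmetric subspace is spanned by product vectors, and polarization
  over roots of unity turns <chi, A phi>^n into such forms. By unitary invariance of the prior,
  the integral of eta(rho) <u, rho u>^n over an invariant set S equals |u|^(2n) kappa_S, hence
  the integral of eta(rho) Tr(rho^n Pi_p Q Pi_p) over S is kappa_S Tr(Pi_p Q Pi_p). With
  t = Tr(Pi_p Q Pi_p) this gives
     p(pure|Q) <= kappa_pure t / (kappa_pure t + kappa_mixed t) = p(pure|Pi_p).
*)

theory Submission
  imports Defs "HOL-Combinatorics.List_Permutation" "HOL-Computational_Algebra.Polynomial"
begin

lemma digit_less: "m \<ge> 1 \<Longrightarrow> digit m k i < m"
  unfolding digit_def by simp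

lemma sum_digits_eq_mod: "(\<Sum>k<n. digit m k i * m ^ k) = i mod m ^ n"
proof (induction n)
  case (Suc n)
  have "i mod m ^ Suc n = m ^ n * digit m n i + i mod m ^ n"
    using mod_mult2_eq[of i "m ^ n" m] by (simp add: digit_def mult.commute)
  then show ?case using Suc by simp
qed simp

lemma digits_eq_imp_eq:
  assumes "i < m ^ n" "j < m ^ n" "\<And>k. k < n \<Longrightarrow> digit m k i = digit m k j"
  shows "i = j"
proof -
  have "i = (\<Sum>k<n. digit m k i * m ^ k)" using assms(1) by (simp add: sum_digits_eq_mod)
  also have "\<dots> = (\<Sum>k<n. digit m k j * m ^ k)" using assms(3) by (intro sum.cong) auto
  also have "\<dots> = j" using assms(2) by (simp add: sum_digits_eq_mod)
  finally show ?thesis .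
qed

lemma base_sum_less:
  fixes g :: "nat \<Rightarrow> nat"
  assumes "\<And>j. j < n \<Longrightarrow> g j < m"
  shows "(\<Sum>j<n. g j * m ^ j) < m ^ n"
  using assms
proof (induction n)
  case (Suc n)
  have "(\<Sum>j<Suc n. g j * m ^ j) < m ^ n + g n * m ^ n" using Suc by simp
  also have "\<dots> = (g n + 1) * m ^ n" by simp
  also have "\<dots> \<le> m * m ^ n" using Suc.prems[of n] by (intro mult_right_mono) auto
  finally show ?case by simp
qed simp

lemma digit_add_high: "digit m k (x + m ^ Suc k * y) = digit m k x"
proof (cases "m = 0")
  case False
  then have "(x + m ^ k * (m * y)) div m ^ k = x div m ^ k + m * y" by simp
  then show ?thesis by (simp add: digit_def ac_simps)
qed (simp add: digit_def)

lemma digit_base_sum: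
  fixes g :: "nat \<Rightarrow> nat"
  assumes "\<And>j. j < n \<Longrightarrow> g j < m" "k < n"
  shows "digit m k (\<Sum>j<n. g j * m ^ j) = g k"
  using assms
proof (induction n)
  case (Suc n)
  define S where "S = (\<Sum>j<n. g j * m ^ j)"
  have S: "S < m ^ n" unfolding S_def using Suc.prems by (intro base_sum_less) auto
  have sum: "(\<Sum>j<Suc n. g j * m ^ j) = S + g n * m ^ n" by (simp add: S_def)
  show ?case
  proof (cases "k = n")
    case True
    have "m ^ n \<noteq> 0" using S by (metis not_less0)
    then have "(S + g n * m ^ n) div m ^ k = g n" using S True by simp
    then show ?thesis using True Suc.prems sum by (simp add: digit_def)
  next
    case False
    then have kn: "k < n" using Suc.prems by simp
    then have "m ^ n = m ^ Suc k * m ^ (n - Suc k)" by (metis Suc_leI le_add_diff_inverse power_add)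
    then have "digit m k (S + g n * m ^ n) = digit m k S"
      using digit_add_high[of m k S "m ^ (n - Suc k) * g n"] by (simp add: ac_simps)
    then show ?thesis using Suc kn sum by (simp add: S_def)
  qed
qed simp

lemma sum_prod_digits:
  fixes f :: "nat \<Rightarrow> nat \<Rightarrow> 'a::comm_semiring_1"
  assumes m: "m \<ge> 1"
  shows "(\<Sum>i<m ^ n. \<Prod>k<n. f k (digit m k i)) = (\<Prod>k<n. \<Sum>a<m. f k a)"
proof -
  define h where "h i = restrict (\<lambda>k. digit m k i) {..<n}" for i
  have bij: "bij_betw h {..<m ^ n} (Pi\<^sub>E {..<n} (\<lambda>_. {..<m}))"
  proof (rule bij_betwI')
    fix x y assume "x \<in> {..<m ^ n}" "y \<in> {..<m ^ n}"
    then show "(h x = h y) = (x = y)"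
      unfolding h_def using digits_eq_imp_eq[of x m n y] by (auto simp: restrict_def fun_eq_iff)
  next
    fix x assume "x \<in> {..<m ^ n}"
    then show "h x \<in> Pi\<^sub>E {..<n} (\<lambda>_. {..<m})" unfolding h_def using digit_less[OF m] by auto
  next
    fix g assume g: "g \<in> Pi\<^sub>E {..<n} (\<lambda>_. {..<m})"
    define x where "x = (\<Sum>j<n. g j * m ^ j)"
    have "x < m ^ n" unfolding x_def using g by (intro base_sum_less) auto
    moreover have "h x = g"
      unfolding h_def x_def using g digit_base_sum[of n g m]
      by (auto simp: fun_eq_iff PiE_def extensional_def)
    ultimately show "\<exists>x\<in>{..<m ^ n}. g = h x" by auto
  qed
  have "(\<Prod>k<n. \<Sum>a<m. f k a) = (\<Sum>g\<in>Pi\<^sub>E {..<n} (\<lambda>_. {..<m}). \<Prod>k<n. f k (g k))"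
    by (rule prod_sum_PiE) auto
  also have "\<dots> = (\<Sum>i<m ^ n. \<Prod>k<n. f k (h i k))"
    by (rule sum.reindex_bij_betw[OF bij, symmetric])
  also have "\<dots> = (\<Sum>i<m ^ n. \<Prod>k<n. f k (digit m k i))"
    by (intro sum.cong prod.cong) (auto simp: h_def)
  finally show ?thesis by simp
qed

lemma perm_idx_less: "m \<ge> 1 \<Longrightarrow> perm_idx m n \<sigma> i < m ^ n"
  unfolding perm_idx_def using digit_less by (intro base_sum_less) auto

lemma digit_perm_idx:
  assumes "m \<ge> 1" "\<sigma> permutes {..<n}" "k < n"
  shows "digit m k (perm_idx m n \<sigma> i) = digit m (\<sigma> k) i"
  unfolding perm_idx_def using assms digit_less by (intro digit_base_sum) auto

lemma bij_betw_perm_idx: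
  assumes m: "m \<ge> 1" and \<sigma>: "\<sigma> permutes {..<n}"
  shows "bij_betw (perm_idx m n \<sigma>) {..<m ^ n} {..<m ^ n}"
proof -
  have inj: "inj_on (perm_idx m n \<sigma>) {..<m ^ n}"
  proof (rule inj_onI)
    fix x y assume x: "x \<in> {..<m ^ n}" and y: "y \<in> {..<m ^ n}"
      and eq: "perm_idx m n \<sigma> x = perm_idx m n \<sigma> y"
    show "x = y"
    proof (rule digits_eq_imp_eq[of x m n y])
      fix k assume k: "k < n"
      obtain j where j: "j < n" "\<sigma> j = k"
        using \<sigma> k by (metis lessThan_iff permutes_def)
      show "digit m k x = digit m k y"
        using eq digit_perm_idx[OF m \<sigma> j(1)] j by metis
    qed (use x y in auto)
  qed
  have "perm_idx m n \<sigma> ` {..<m ^ n} = {..<m ^ n}"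
    by (rule endo_inj_surj[OF _ _ inj]) (use perm_idx_less[OF m] in auto)
  then show ?thesis using inj unfolding bij_betw_def by auto
qed

lemma mult_mat_vec_sum: "A \<in> carrier_mat N N' \<Longrightarrow> y \<in> carrier_vec N' \<Longrightarrow> i < N \<Longrightarrow>
  (A *\<^sub>v y) $ i = (\<Sum>j<N'. A $$ (i,j) * y $ j)"
  by (auto simp: scalar_prod_def atLeast0LessThan)

lemma mult_mat_unit_vec:
  fixes C :: "complex mat"
  assumes C: "C \<in> carrier_mat N N" and c: "c < N" and i: "i < N"
  shows "(C *\<^sub>v unit_vec N c) $ i = C $$ (i,c)"
proof -
  have "(C *\<^sub>v unit_vec N c) $ i = (\<Sum>k<N. C $$ (i,k) * unit_vec N c $ k)"
    by (rule mult_mat_vec_sum[OF C _ i]) simp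
  also have "\<dots> = (\<Sum>k<N. (if k = c then C $$ (i,c) else 0))"
    by (intro sum.cong) (auto simp: unit_vec_def)
  finally show ?thesis using c by simp
qed

lemma mat_eq_by_mult_vec:
  fixes A B :: "complex mat"
  assumes A: "A \<in> carrier_mat N N" and B: "B \<in> carrier_mat N N"
    and eq: "\<And>v. v \<in> carrier_vec N \<Longrightarrow> A *\<^sub>v v = B *\<^sub>v v"
  shows "A = B"
proof (rule eq_matI)
  fix i j assume "i < dim_row B" "j < dim_col B"
  then have ij: "i < N" "j < N" using B by auto
  then show "A $$ (i,j) = B $$ (i,j)"
    using eq[of "unit_vec N j"] mult_mat_unit_vec[OF A ij(2,1)] mult_mat_unit_vec[OF B ij(2,1)] by simp
qed (use A B in auto)

lemma cinner_carrier: "x \<in> carrier_vec N \<Longrightarrow> cinner x y = (\<Sum>i<N. cnj (x $ i) * y $ i)"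
  unfolding cinner_def by auto

lemma cinner_mult_mat_vec:
  assumes A: "A \<in> carrier_mat N N'" and x: "x \<in> carrier_vec N" and y: "y \<in> carrier_vec N'"
  shows "cinner x (A *\<^sub>v y) = (\<Sum>i<N. \<Sum>j<N'. cnj (x $ i) * A $$ (i,j) * y $ j)"
proof -
  have "cinner x (A *\<^sub>v y) = (\<Sum>i<N. cnj (x $ i) * (\<Sum>j<N'. A $$ (i,j) * y $ j))"
    unfolding cinner_carrier[OF x]
    by (intro sum.cong refl arg_cong2[where f="(*)"] mult_mat_vec_sum[OF A y]) auto
  then show ?thesis by (simp add: sum_distrib_left mult.assoc)
qed

lemma cinner_add_left:
  "x \<in> carrier_vec N \<Longrightarrow> y \<in> carrier_vec N \<Longrightarrow> cinner (x + y) z = cinner x z + cinner y z"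
  by (simp add: cinner_carrier[of _ N] algebra_simps sum.distrib)

lemma cinner_add_right: "x \<in> carrier_vec N \<Longrightarrow> y \<in> carrier_vec N \<Longrightarrow> z \<in> carrier_vec N \<Longrightarrow>
  cinner x (y + z) = cinner x y + cinner x z"
  by (simp add: cinner_carrier[of _ N] algebra_simps sum.distrib)

lemma cinner_diff_right: "x \<in> carrier_vec N \<Longrightarrow> y \<in> carrier_vec N \<Longrightarrow> z \<in> carrier_vec N \<Longrightarrow>
  cinner x (y - z) = cinner x y - cinner x z"
  by (simp add: cinner_carrier[of _ N] algebra_simps sum_subtractf)

lemma cinner_diff_left:
  "x \<in> carrier_vec N \<Longrightarrow> y \<in> carrier_vec N \<Longrightarrow> cinner (x - y) z = cinner x z - cinner y z"
  by (simp add: cinner_carrier[of _ N] algebra_simps sum_subtractf)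

lemma cinner_smult_left: "x \<in> carrier_vec N \<Longrightarrow> cinner (z \<cdot>\<^sub>v x) y = cnj z * cinner x y"
  by (simp add: cinner_carrier[of _ N] sum_distrib_left mult.assoc)

lemma cinner_smult_right:
  "x \<in> carrier_vec N \<Longrightarrow> y \<in> carrier_vec N \<Longrightarrow> cinner x (z \<cdot>\<^sub>v y) = z * cinner x y"
  by (simp add: cinner_carrier[of _ N] sum_distrib_left algebra_simps)

lemma cinner_zero_right: "x \<in> carrier_vec N \<Longrightarrow> cinner x (0\<^sub>v N) = 0"
  by (simp add: cinner_carrier[of _ N])

lemma cinner_cnj: "x \<in> carrier_vec N \<Longrightarrow> y \<in> carrier_vec N \<Longrightarrow> cinner x y = cnj (cinner y x)"
  by (simp add: cinner_carrier mult.commute)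

lemma cinner_unit_vec: "d < N \<Longrightarrow> cinner (unit_vec N d) y = y $ d"
proof -
  assume d: "d < N"
  have "cinner (unit_vec N d) y = (\<Sum>i<N. if i = d then y $ d else 0)"
    unfolding cinner_carrier[OF unit_vec_carrier] by (intro sum.cong) (auto simp: unit_vec_def)
  then show ?thesis using d by simp
qed

lemma cinner_self_eq_norms:
  assumes v: "v \<in> carrier_vec N"
  shows "cinner v v = complex_of_real (\<Sum>i<N. (cmod (v $ i))\<^sup>2)"
proof -
  have "cinner v v = (\<Sum>i<N. complex_of_real ((cmod (v $ i))\<^sup>2))"
    unfolding cinner_carrier[OF v] by (intro sum.cong refl) (simp only: complex_norm_square mult.commute)
  then show ?thesis by (simp only: of_real_sum)
qed

lemma cinner_self_nonneg: "v \<in> carrier_vec N \<Longrightarrow> Im (cinner v v) = 0 \<and> Re (cinner v v) \<ge> 0"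
  by (simp add: cinner_self_eq_norms sum_nonneg)

lemma cinner_self_eq_0:
  assumes v: "v \<in> carrier_vec N" and z: "cinner v v = 0"
  shows "v = 0\<^sub>v N"
proof -
  have "(\<Sum>i<N. (cmod (v $ i))\<^sup>2) = 0" using z by (simp only: cinner_self_eq_norms[OF v] of_real_eq_0_iff)
  then have "\<forall>i\<in>{..<N}. (cmod (v $ i))\<^sup>2 = 0" by (subst sum_nonneg_eq_0_iff[symmetric]) auto
  then show ?thesis using v by (intro eq_vecI) auto
qed

lemma adj_carrier[simp]: "A \<in> carrier_mat N N' \<Longrightarrow> adj A \<in> carrier_mat N' N"
  unfolding adj_def by auto

lemma index_adj: "A \<in> carrier_mat N N' \<Longrightarrow> i < N' \<Longrightarrow> j < N \<Longrightarrow> adj A $$ (i,j) = cnj (A $$ (j,i))"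
  unfolding adj_def by auto

lemma adj_one: "adj (1\<^sub>m N) = (1\<^sub>m N :: complex mat)"
  by (rule eq_matI) (auto simp: adj_def)

lemma cinner_adj:
  assumes A: "A \<in> carrier_mat N N'" and x: "x \<in> carrier_vec N" and y: "y \<in> carrier_vec N'"
  shows "cinner x (A *\<^sub>v y) = cinner (adj A *\<^sub>v x) y"
proof -
  have Ax: "adj A *\<^sub>v x \<in> carrier_vec N'" by (rule mult_mat_vec_carrier[OF adj_carrier[OF A] x])
  have "cinner (adj A *\<^sub>v x) y = (\<Sum>j<N'. cnj (\<Sum>i<N. adj A $$ (j,i) * x $ i) * y $ j)"
    unfolding cinner_carrier[OF Ax] using A x
      by (intro sum.cong refl) (simp add: mult_mat_vec_sum[of _ N' N])
  also have "\<dots> = (\<Sum>j<N'. \<Sum>i<N. cnj (x $ i) * A $$ (i,j) * y $ j)"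
    using A by (intro sum.cong refl) (simp add: index_adj sum_distrib_right sum_distrib_left ac_simps)
  also have "\<dots> = cinner x (A *\<^sub>v y)"
    by (simp add: cinner_mult_mat_vec[OF A x y]) (rule sum.swap)
  finally show ?thesis by simp
qed

lemma mtrace_mult: "A \<in> carrier_mat N N \<Longrightarrow> B \<in> carrier_mat N N \<Longrightarrow>
  mtrace (A * B) = (\<Sum>i<N. \<Sum>j<N. A $$ (i,j) * B $$ (j,i))"
  unfolding mtrace_def by (auto simp: scalar_prod_def atLeast0LessThan intro!: sum.cong)

lemma mtrace_mult_comm:
  fixes X Y :: "complex mat"
  assumes "X \<in> carrier_mat N N" "Y \<in> carrier_mat N N"
  shows "mtrace (X * Y) = mtrace (Y * X)"
proof -
  have "mtrace (X * Y) = (\<Sum>i<N. \<Sum>j<N. X $$ (i,j) * Y $$ (j,i))" by (rule mtrace_mult[OF assms])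
  also have "\<dots> = (\<Sum>j<N. \<Sum>i<N. X $$ (i,j) * Y $$ (j,i))" by (rule sum.swap)
  finally show ?thesis using assms by (simp add: mtrace_mult mult.commute)
qed

lemma mtrace_eq_sum_cinner:
  fixes X :: "complex mat"
  assumes X: "X \<in> carrier_mat N N"
  shows "mtrace X = (\<Sum>i<N. cinner (unit_vec N i) (X *\<^sub>v unit_vec N i))"
  using X by (simp add: mtrace_def cinner_unit_vec mult_mat_unit_vec)

definition outer_prod :: "complex vec \<Rightarrow> complex vec \<Rightarrow> complex mat" where
  "outer_prod v w = Matrix.mat (dim_vec v) (dim_vec w) (\<lambda>(i,j). v $ i * cnj (w $ j))"

lemma outer_prod_carrier[simp]:
  "v \<in> carrier_vec N \<Longrightarrow> w \<in> carrier_vec N \<Longrightarrow> outer_prod v w \<in> carrier_mat N N"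
  unfolding outer_prod_def by auto

lemma index_outer_prod: "v \<in> carrier_vec N \<Longrightarrow> w \<in> carrier_vec N \<Longrightarrow> i < N \<Longrightarrow> j < N \<Longrightarrow>
  outer_prod v w $$ (i,j) = v $ i * cnj (w $ j)"
  unfolding outer_prod_def by auto

lemma mtrace_mult_outer_prod:
  assumes B: "B \<in> carrier_mat N N" and v: "v \<in> carrier_vec N" and w: "w \<in> carrier_vec N"
  shows "mtrace (B * outer_prod v w) = cinner w (B *\<^sub>v v)"
    and "mtrace (outer_prod v w * B) = cinner w (B *\<^sub>v v)"
proof -
  have "mtrace (B * outer_prod v w) = (\<Sum>i<N. \<Sum>j<N. B $$ (i,j) * outer_prod v w $$ (j,i))"
    using B v w by (intro mtrace_mult) auto
  also have "\<dots> = (\<Sum>i<N. \<Sum>j<N. cnj (w $ i) * B $$ (i,j) * v $ j)"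
    using v w by (intro sum.cong refl) (simp add: index_outer_prod)
  finally show *: "mtrace (B * outer_prod v w) = cinner w (B *\<^sub>v v)"
    by (simp add: cinner_mult_mat_vec[OF B w v])
  show "mtrace (outer_prod v w * B) = cinner w (B *\<^sub>v v)"
    using mtrace_mult_comm[OF outer_prod_carrier[OF v w] B] * by simp
qed

definition tensor_vec :: "nat \<Rightarrow> nat \<Rightarrow> complex vec \<Rightarrow> complex vec" where
  "tensor_vec m n \<phi> = vec (m ^ n) (\<lambda>i. \<Prod>k<n. \<phi> $ digit m k i)"

lemma tensor_vec_carrier[simp]: "tensor_vec m n \<phi> \<in> carrier_vec (m ^ n)"
  unfolding tensor_vec_def by simp

lemma index_tensor_vec: "i < m ^ n \<Longrightarrow> tensor_vec m n \<phi> $ i = (\<Prod>k<n. \<phi> $ digit m k i)"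
  unfolding tensor_vec_def by simp

lemma tensor_pow_carrier[simp]: "tensor_pow m n A \<in> carrier_mat (m ^ n) (m ^ n)"
  unfolding tensor_pow_def by simp

lemma index_tensor_pow: "i < m ^ n \<Longrightarrow> j < m ^ n \<Longrightarrow>
  tensor_pow m n A $$ (i,j) = (\<Prod>k<n. A $$ (digit m k i, digit m k j))"
  unfolding tensor_pow_def by simp

lemma tensor_pow_outer_prod:
  assumes m: "m \<ge> 1" and \<psi>: "\<psi> \<in> carrier_vec m"
  shows "tensor_pow m n (outer_prod \<psi> \<psi>) = outer_prod (tensor_vec m n \<psi>) (tensor_vec m n \<psi>)"
proof (rule eq_matI)
  fix i j assume "i < dim_row (outer_prod (tensor_vec m n \<psi>) (tensor_vec m n \<psi>))"
    "j < dim_col (outer_prod (tensor_vec m n \<psi>) (tensor_vec m n \<psi>))"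
  then have ij: "i < m ^ n" "j < m ^ n" by (auto simp: outer_prod_def tensor_vec_def)
  then show "tensor_pow m n (outer_prod \<psi> \<psi>) $$ (i, j) =
      outer_prod (tensor_vec m n \<psi>) (tensor_vec m n \<psi>) $$ (i, j)"
    using \<psi> digit_less[OF m]
    by (simp add: index_tensor_pow index_outer_prod[of _ "m ^ n"] index_outer_prod[of _ m]
        index_tensor_vec prod.distrib)
qed (auto simp: outer_prod_def tensor_pow_def tensor_vec_def)

lemma tensor_pow_one:
  assumes m: "m \<ge> 1"
  shows "tensor_pow m n (1\<^sub>m m) = 1\<^sub>m (m ^ n)"
proof (rule eq_matI)
  fix i j assume "i < dim_row (1\<^sub>m (m ^ n) :: complex mat)" "j < dim_col (1\<^sub>m (m ^ n) :: complex mat)"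
  then have ij: "i < m ^ n" "j < m ^ n" by auto
  show "tensor_pow m n (1\<^sub>m m) $$ (i, j) = 1\<^sub>m (m ^ n) $$ (i, j)"
  proof (cases "i = j")
    case True then show ?thesis using ij digit_less[OF m] by (simp add: index_tensor_pow)
  next
    case False
    then obtain k where k: "k < n" "digit m k i \<noteq> digit m k j" using digits_eq_imp_eq[OF ij] by blast
    have "(\<Prod>k<n. (1\<^sub>m m :: complex mat) $$ (digit m k i, digit m k j)) = 0"
      using k digit_less[OF m] by (intro prod_zero) (auto intro!: bexI[of _ k])
    then show ?thesis using ij False by (simp add: index_tensor_pow)
  qed
qed (auto simp: tensor_pow_def)

lemma adj_tensor_pow:
  assumes m: "m \<ge> 1" and herm: "\<And>i j. i < m \<Longrightarrow> j < m \<Longrightarrow> A $$ (j,i) = cnj (A $$ (i,j))"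
  shows "adj (tensor_pow m n A) = tensor_pow m n A"
proof (rule eq_matI)
  fix i j assume "i < dim_row (tensor_pow m n A)" "j < dim_col (tensor_pow m n A)"
  then have ij: "i < m ^ n" "j < m ^ n" by (auto simp: tensor_pow_def)
  have "adj (tensor_pow m n A) $$ (i,j) = (\<Prod>k<n. cnj (A $$ (digit m k j, digit m k i)))"
    using ij by (simp add: index_adj[of _ "m ^ n" "m ^ n"] index_tensor_pow)
  also have "\<dots> = (\<Prod>k<n. A $$ (digit m k i, digit m k j))"
  proof (intro prod.cong refl)
    fix k
    show "cnj (A $$ (digit m k j, digit m k i)) = A $$ (digit m k i, digit m k j)"
      using herm[of "digit m k i" "digit m k j"] digit_less[OF m] by simp
  qed
  finally show "adj (tensor_pow m n A) $$ (i,j) = tensor_pow m n A $$ (i,j)"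
    using ij by (simp add: index_tensor_pow)
qed (auto simp: adj_def tensor_pow_def)

lemma cinner_tensor_pow:
  assumes m: "m \<ge> 1" and A: "A \<in> carrier_mat m m" and \<phi>: "\<phi> \<in> carrier_vec m"
    and \<chi>: "\<chi> \<in> carrier_vec m"
  shows "cinner (tensor_vec m n \<chi>) (tensor_pow m n A *\<^sub>v tensor_vec m n \<phi>) = (cinner \<chi> (A *\<^sub>v \<phi>)) ^ n"
proof -
  let ?f = "\<lambda>a b. cnj (\<chi> $ a) * A $$ (a, b) * \<phi> $ b"
  have "cinner (tensor_vec m n \<chi>) (tensor_pow m n A *\<^sub>v tensor_vec m n \<phi>) =
    (\<Sum>i<m ^ n. \<Sum>j<m ^ n. cnj (tensor_vec m n \<chi> $ i) * tensor_pow m n A $$ (i,j) * tensor_vec m n \<phi> $ j)"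
    by (rule cinner_mult_mat_vec) auto
  also have "\<dots> = (\<Sum>i<m ^ n. \<Sum>j<m ^ n. \<Prod>k<n. ?f (digit m k i) (digit m k j))"
    by (intro sum.cong refl) (simp add: index_tensor_vec index_tensor_pow flip: prod.distrib)
  also have "\<dots> = (\<Sum>i<m ^ n. \<Prod>k<n. \<Sum>b<m. ?f (digit m k i) b)"
    by (intro sum.cong refl sum_prod_digits[OF m])
  also have "\<dots> = (\<Sum>a<m. \<Sum>b<m. ?f a b) ^ n"
    using sum_prod_digits[OF m, of "\<lambda>k a. \<Sum>b<m. ?f a b" n] by simp
  also have "\<dots> = (cinner \<chi> (A *\<^sub>v \<phi>)) ^ n"
    by (simp only: cinner_mult_mat_vec[OF A \<chi> \<phi>])
  finally show ?thesis .
qed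

lemma tensor_vec_sym_subspace:
  assumes m: "m \<ge> 1"
  shows "tensor_vec m n \<phi> \<in> sym_subspace m n"
proof -
  have "tensor_vec m n \<phi> $ perm_idx m n \<sigma> i = tensor_vec m n \<phi> $ i"
    if \<sigma>: "\<sigma> permutes {..<n}" and i: "i < m ^ n" for \<sigma> i
  proof -
    have "tensor_vec m n \<phi> $ perm_idx m n \<sigma> i = (\<Prod>k<n. \<phi> $ digit m (\<sigma> k) i)"
      using perm_idx_less[OF m] by (simp add: index_tensor_vec digit_perm_idx[OF m \<sigma>])
    also have "\<dots> = (\<Prod>k<n. \<phi> $ digit m k i)"
      using prod.permute[OF \<sigma>, of "\<lambda>k. \<phi> $ digit m k i"] by (simp add: comp_def)
    finally show ?thesis using i by (simp add: index_tensor_vec)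
  qed
  then show ?thesis unfolding sym_subspace_def by auto
qed

lemma tensor_pow_sym_subspace:
  assumes m: "m \<ge> 1" and v: "v \<in> sym_subspace m n"
  shows "tensor_pow m n A *\<^sub>v v \<in> sym_subspace m n"
proof -
  let ?T = "tensor_pow m n A"
  have vc: "v \<in> carrier_vec (m ^ n)" using v unfolding sym_subspace_def by auto
  have "(?T *\<^sub>v v) $ perm_idx m n \<sigma> i = (?T *\<^sub>v v) $ i"
    if \<sigma>: "\<sigma> permutes {..<n}" and i: "i < m ^ n" for \<sigma> i
  proof -
    let ?p = "perm_idx m n \<sigma>"
    have T: "?T $$ (?p i, ?p j) = ?T $$ (i, j)" if j: "j < m ^ n" for j
    proof -
      have "?T $$ (?p i, ?p j) = (\<Prod>k<n. A $$ (digit m (\<sigma> k) i, digit m (\<sigma> k) j))"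
        using i j perm_idx_less[OF m] by (simp add: index_tensor_pow digit_perm_idx[OF m \<sigma>])
      also have "\<dots> = (\<Prod>k<n. A $$ (digit m k i, digit m k j))"
        using prod.permute[OF \<sigma>, of "\<lambda>k. A $$ (digit m k i, digit m k j)"] by (simp add: comp_def)
      finally show ?thesis using i j by (simp add: index_tensor_pow)
    qed
    have "(?T *\<^sub>v v) $ ?p i = (\<Sum>j<m ^ n. ?T $$ (?p i, j) * v $ j)"
      using vc perm_idx_less[OF m] by (simp add: mult_mat_vec_sum[of _ "m ^ n" "m ^ n"])
    also have "\<dots> = (\<Sum>j<m ^ n. ?T $$ (?p i, ?p j) * v $ ?p j)"
      by (rule sum.reindex_bij_betw[OF bij_betw_perm_idx[OF m \<sigma>], symmetric])
    also have "\<dots> = (\<Sum>j<m ^ n. ?T $$ (i, j) * v $ j)"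
      using v \<sigma> T unfolding sym_subspace_def by (intro sum.cong) auto
    also have "\<dots> = (?T *\<^sub>v v) $ i"
      using vc i by (simp add: mult_mat_vec_sum[of _ "m ^ n" "m ^ n"])
    finally show ?thesis .
  qed
  moreover have "?T *\<^sub>v v \<in> carrier_vec (m ^ n)"
    by (rule mult_mat_vec_carrier[OF tensor_pow_carrier vc])
  ultimately show ?thesis unfolding sym_subspace_def by auto
qed

section \<open>Positive semidefinite kernels\<close>

definition quad_form :: "nat \<Rightarrow> (nat \<Rightarrow> nat \<Rightarrow> complex) \<Rightarrow> (nat \<Rightarrow> complex) \<Rightarrow> complex" where
  "quad_form N f v = (\<Sum>a<N. \<Sum>b<N. cnj (v a) * f a b * v b)"

definition psd_kernel :: "nat \<Rightarrow> (nat \<Rightarrow> nat \<Rightarrow> complex) \<Rightarrow> bool" where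
  "psd_kernel N f \<longleftrightarrow> (\<forall>a<N. \<forall>b<N. f b a = cnj (f a b)) \<and>
     (\<forall>v. Im (quad_form N f v) = 0 \<and> Re (quad_form N f v) \<ge> 0)"

lemma quad_form_support:
  assumes S: "S \<subseteq> {..<N}" and v: "\<And>a. a \<notin> S \<Longrightarrow> v a = 0"
  shows "quad_form N f v = (\<Sum>a\<in>S. \<Sum>b\<in>S. cnj (v a) * f a b * v b)"
proof -
  have "(\<Sum>b<N. cnj (v a) * f a b * v b) = (\<Sum>b\<in>S. cnj (v a) * f a b * v b)" for a
    using S v by (intro sum.mono_neutral_right) auto
  then have "quad_form N f v = (\<Sum>a<N. \<Sum>b\<in>S. cnj (v a) * f a b * v b)"
    unfolding quad_form_def by simp
  also have "\<dots> = (\<Sum>a\<in>S. \<Sum>b\<in>S. cnj (v a) * f a b * v b)"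
    using S v by (intro sum.mono_neutral_right) auto
  finally show ?thesis .
qed

lemma quad_form_one_point:
  "i < N \<Longrightarrow> quad_form N f (\<lambda>a. if a = i then x else 0) = cnj x * x * f i i"
  by (subst quad_form_support[of "{i}"]) (auto simp: ac_simps)

lemma quad_form_two_points:
  assumes "i < N" "j < N" "i \<noteq> j"
  shows "quad_form N f (\<lambda>a. if a = i then x else if a = j then y else 0) =
    cnj x * x * f i i + cnj x * y * f i j + cnj y * x * f j i + cnj y * y * f j j"
  using assms by (subst quad_form_support[of "{i, j}"]) (auto simp: ac_simps)

lemma quad_form_shift:
  assumes k: "k < N"
  shows "quad_form N f (\<lambda>a. v a + (if a = k then x else 0)) =
    quad_form N f v + (\<Sum>a<N. cnj (v a) * f a k) * x + cnj x * (\<Sum>b<N. f k b * v b) + cnj x * x * f k k"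
proof -
  let ?d = "\<lambda>a. if a = k then x else (0::complex)"
  have "quad_form N f (\<lambda>a. v a + ?d a) = quad_form N f v + (\<Sum>a<N. \<Sum>b<N. cnj (v a) * f a b * ?d b)
      + (\<Sum>a<N. \<Sum>b<N. cnj (?d a) * f a b * v b) + (\<Sum>a<N. \<Sum>b<N. cnj (?d a) * f a b * ?d b)"
    unfolding quad_form_def by (simp add: algebra_simps sum.distrib)
  also have "(\<Sum>a<N. \<Sum>b<N. cnj (v a) * f a b * ?d b) = (\<Sum>a<N. cnj (v a) * f a k) * x"
    using k by (simp add: if_distrib sum_distrib_right cong: if_cong)
  also have "(\<Sum>a<N. \<Sum>b<N. cnj (?d a) * f a b * v b) =
      (\<Sum>a<N. if a = k then cnj x * (\<Sum>b<N. f k b * v b) else 0)"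
    by (intro sum.cong) (auto simp: sum_distrib_left mult.assoc)
  also have "\<dots> = cnj x * (\<Sum>b<N. f k b * v b)"
    using k by simp
  also have "(\<Sum>a<N. \<Sum>b<N. cnj (?d a) * f a b * ?d b) = (\<Sum>a<N. if a = k then cnj x * x * f k k else 0)"
    using k by (intro sum.cong) (auto simp: if_distrib cong: if_cong)
  also have "\<dots> = cnj x * x * f k k"
    using k by simp
  finally show ?thesis .
qed

lemma positive_op_quad_form:
  assumes "positive_op N A"
  shows "Im (quad_form N (\<lambda>a b. A $$ (a,b)) v) = 0 \<and> Re (quad_form N (\<lambda>a b. A $$ (a,b)) v) \<ge> 0"
proof -
  have A: "A \<in> carrier_mat N N" using assms unfolding positive_op_def by auto
  have vc: "vec N v \<in> carrier_vec N" by simp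
  have "cinner (vec N v) (A *\<^sub>v vec N v) = quad_form N (\<lambda>a b. A $$ (a,b)) v"
    unfolding quad_form_def by (simp add: cinner_mult_mat_vec[OF A vc vc])
  then show ?thesis using assms vc unfolding positive_op_def by metis
qed

text \<open>Test the form on $e_i + e_j$ and $e_i + \mathrm{i}\,e_j$.\<close>

lemma quad_form_real_imp_hermitian:
  assumes q: "\<And>v. Im (quad_form N f v) = 0" and ij: "i < N" "j < N"
  shows "f j i = cnj (f i j)"
proof -
  have ii: "Im (f i i) = 0" using q[of "\<lambda>a. if a = i then 1 else 0"] quad_form_one_point[OF ij(1), of f 1]
    by simp
  have jj: "Im (f j j) = 0" using q[of "\<lambda>a. if a = j then 1 else 0"] quad_form_one_point[OF ij(2), of f 1]
    by simp
  show ?thesis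
  proof (cases "i = j")
    case True then show ?thesis using ii by (simp add: complex_eq_iff)
  next
    case False
    have "Im (f i j + f j i) = 0"
      using q[of "\<lambda>a. if a = i then 1 else if a = j then 1 else 0"]
        quad_form_two_points[OF ij False, of f 1 1] ii jj by simp
    moreover have "Re (f i j - f j i) = 0"
      using q[of "\<lambda>a. if a = i then 1 else if a = j then \<i> else 0"]
        quad_form_two_points[OF ij False, of f 1 \<i>] ii jj by (simp add: algebra_simps)
    ultimately show ?thesis by (simp add: complex_eq_iff)
  qed
qed

lemma positive_op_psd_kernel: "positive_op N A \<Longrightarrow> psd_kernel N (\<lambda>a b. A $$ (a,b))"
  unfolding psd_kernel_def using positive_op_quad_form quad_form_real_imp_hermitian by blast

lemma psd_kernel_diag:
  assumes f: "psd_kernel N f" and k: "k < N"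
  shows "f k k = complex_of_real (Re (f k k))" and "Re (f k k) \<ge> 0"
  using f quad_form_one_point[OF k, of f 1] unfolding psd_kernel_def
  by (metis complex_cnj_one complex_is_Real_iff mult_1 of_real_Re)+

text \<open>Otherwise the form is negative on $t\,e_k + e_b$ for a suitable $t$.\<close>

lemma psd_kernel_zero_diag:
  assumes f: "psd_kernel N f" and k: "k < N" and b: "b < N" and fkk: "f k k = 0"
  shows "f k b = 0"
proof (rule ccontr)
  assume c0: "f k b \<noteq> 0"
  then have bk: "b \<noteq> k" using fkk by auto
  define c where "c = f k b"
  define s where "s = (Re (f b b) + 1) / (2 * (cmod c)\<^sup>2)"
  define t where "t = - (complex_of_real s * c)"
  have fbk: "f b k = cnj c" using f k b unfolding psd_kernel_def c_def by blast
  have "quad_form N f (\<lambda>a. if a = k then t else if a = b then 1 else 0) = cnj t * c + t * cnj c + f b b"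
    using quad_form_two_points[OF k b bk[symmetric], of f t 1] fkk fbk by (simp add: c_def)
  also have "\<dots> = - complex_of_real (2 * s * (cmod c)\<^sup>2) + f b b"
    unfolding t_def using complex_norm_square[of c] by (simp add: algebra_simps)
  moreover have "2 * s * (cmod c)\<^sup>2 = Re (f b b) + 1" using c0 unfolding s_def c_def by simp
  ultimately have "Re (quad_form N f (\<lambda>a. if a = k then t else if a = b then 1 else 0)) = -1"
    by simp
  then show False using f unfolding psd_kernel_def by (metis neg_0_le_iff_le not_one_le_zero)
qed

text \<open>One step of Cholesky elimination: subtracting $u u^\dagger$, where $u$ is the $k$-th column
  scaled by $1/\sqrt{f_{kk}}$, keeps the kernel positive and clears row and column $k$. If $f_{kk} = 0$
  that row and column already vanish and $u = 0$.\<close>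

definition pivot_col :: "(nat \<Rightarrow> nat \<Rightarrow> complex) \<Rightarrow> nat \<Rightarrow> nat \<Rightarrow> complex" where
  "pivot_col f k a = (if Re (f k k) = 0 then 0 else f a k / complex_of_real (sqrt (Re (f k k))))"

lemma pivot_col_outer:
  assumes f: "psd_kernel N f" and k: "k < N" and b: "b < N" and r: "Re (f k k) \<noteq> 0"
  shows "pivot_col f k a * cnj (pivot_col f k b) = f a k * f k b / f k k"
proof -
  have "cnj (f b k) = f k b" using f k b unfolding psd_kernel_def by (metis complex_cnj_cnj)
  moreover have "complex_of_real (sqrt (Re (f k k))) * complex_of_real (sqrt (Re (f k k))) = f k k"
    using psd_kernel_diag[OF f k] by (simp flip: of_real_mult)
  ultimately show ?thesis using r unfolding pivot_col_def by (simp add: field_simps)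
qed

lemma pivot_col_clears:
  assumes f: "psd_kernel N f" and k: "k < N" and b: "b < N"
  shows "f k b = pivot_col f k k * cnj (pivot_col f k b)"
    and "f b k = pivot_col f k b * cnj (pivot_col f k k)"
proof -
  have herm: "f b k = cnj (f k b)" using f k b unfolding psd_kernel_def by blast
  show *: "f k b = pivot_col f k k * cnj (pivot_col f k b)"
  proof (cases "Re (f k k) = 0")
    case True
    then have "f k k = 0" using psd_kernel_diag(1)[OF f k] by simp
    then show ?thesis using psd_kernel_zero_diag[OF f k b] by (simp add: pivot_col_def)
  next
    case False
    then have "f k k \<noteq> 0" by auto
    then show ?thesis using pivot_col_outer[OF f k b False] by simp
  qed
  show "f b k = pivot_col f k b * cnj (pivot_col f k k)"
    using arg_cong[OF *, of cnj] herm by (simp add: mult.commute)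
qed

lemma psd_kernel_deflate:
  assumes f: "psd_kernel N f" and k: "k < N"
  shows "psd_kernel N (\<lambda>a b. f a b - pivot_col f k a * cnj (pivot_col f k b))"
proof (cases "Re (f k k) = 0")
  case True
  then show ?thesis using f by (simp add: pivot_col_def)
next
  case False
  let ?u = "pivot_col f k" and ?r = "f k k"
  have r: "?r \<noteq> 0" using False by auto
  have "\<forall>a<N. \<forall>b<N. f b a - ?u b * cnj (?u a) = cnj (f a b - ?u a * cnj (?u b))"
  proof (intro allI impI)
    fix a b assume "a < N" "b < N"
    then have "f b a = cnj (f a b)" using f unfolding psd_kernel_def by blast
    then show "f b a - ?u b * cnj (?u a) = cnj (f a b - ?u a * cnj (?u b))" by (simp add: mult.commute)
  qed
  moreover have "quad_form N (\<lambda>a b. f a b - ?u a * cnj (?u b)) v =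
      quad_form N f (\<lambda>a. v a + (if a = k then - (\<Sum>b<N. f k b * v b) / ?r else 0))" for v
  proof -
    define g where "g = (\<Sum>b<N. f k b * v b)"
    define al where "al = (\<Sum>a<N. cnj (v a) * f a k)"
    have "quad_form N (\<lambda>a b. f a b - ?u a * cnj (?u b)) v =
        quad_form N f v - (\<Sum>a<N. \<Sum>b<N. cnj (v a) * (f a k * f k b / ?r) * v b)"
      unfolding quad_form_def using pivot_col_outer[OF f k _ False]
      by (simp add: algebra_simps sum_subtractf)
    also have "(\<Sum>a<N. \<Sum>b<N. cnj (v a) * (f a k * f k b / ?r) * v b) = al * g / ?r"
      unfolding al_def g_def
      by (simp add: sum_distrib_left sum_distrib_right sum_divide_distrib algebra_simps)
    also have "quad_form N f v - al * g / ?r =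
        quad_form N f (\<lambda>a. v a + (if a = k then - g / ?r else 0))"
      unfolding quad_form_shift[OF k] al_def[symmetric] g_def[symmetric]
      using r psd_kernel_diag(1)[OF f k] by (simp add: field_simps)
    finally show ?thesis unfolding g_def .
  qed
  ultimately show ?thesis using f unfolding psd_kernel_def by metis
qed

lemma psd_kernel_gram_from:
  assumes "psd_kernel N f" "\<forall>a<N. \<forall>b<N. (a < k \<or> b < k) \<longrightarrow> f a b = 0" "k \<le> N"
  shows "\<exists>w. \<forall>a<N. \<forall>b<N. f a b = (\<Sum>j\<in>{k..<N}. w j a * cnj (w j b))"
  using assms
proof (induction "N - k" arbitrary: k f)
  case 0
  then show ?case by auto
next
  case (Suc d)
  then have k: "k < N" by arith
  let ?u = "pivot_col f k"
  define f' where "f' a b = f a b - ?u a * cnj (?u b)" for a b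
  have "psd_kernel N f'" unfolding f'_def by (rule psd_kernel_deflate[OF Suc.prems(1) k])
  moreover have "\<forall>a<N. \<forall>b<N. (a < Suc k \<or> b < Suc k) \<longrightarrow> f' a b = 0"
  proof (intro allI impI)
    fix a b assume ab: "a < N" "b < N" "a < Suc k \<or> b < Suc k"
    show "f' a b = 0"
    proof (cases "a < k \<or> b < k")
      case True
      then have "f a b = 0" "?u a = 0 \<or> ?u b = 0" using Suc.prems(2) ab k by (auto simp: pivot_col_def)
      then show ?thesis by (auto simp: f'_def)
    next
      case False
      then have "a = k \<or> b = k" using ab(3) by auto
      then show ?thesis using pivot_col_clears[OF Suc.prems(1) k] ab by (auto simp: f'_def)
    qed
  qed
  ultimately have "\<exists>w. \<forall>a<N. \<forall>b<N. f' a b = (\<Sum>j\<in>{Suc k..<N}. w j a * cnj (w j b))"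
    using Suc.hyps k by (intro Suc.hyps(1)) auto
  then obtain w where w: "\<forall>a<N. \<forall>b<N. f' a b = (\<Sum>j\<in>{Suc k..<N}. w j a * cnj (w j b))" ..
  have "f a b = (\<Sum>j\<in>{k..<N}. (w(k := ?u)) j a * cnj ((w(k := ?u)) j b))" if ab: "a < N" "b < N" for a b
  proof -
    have "f a b = ?u a * cnj (?u b) + f' a b" by (simp add: f'_def)
    also have "f' a b = (\<Sum>j\<in>{Suc k..<N}. w j a * cnj (w j b))" using w ab by blast
    finally show ?thesis using k by (simp add: sum.atLeast_Suc_lessThan)
  qed
  then show ?case by blast
qed

lemma positive_op_gram:
  assumes "positive_op m \<rho>"
  shows "\<exists>w. \<forall>a<m. \<forall>b<m. \<rho> $$ (a,b) = (\<Sum>j<m. w j a * cnj (w j b))"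
  using psd_kernel_gram_from[OF positive_op_psd_kernel[OF assms], of 0] by (simp add: atLeast0LessThan)

lemma density_ops_carrier: "\<rho> \<in> density_ops m \<Longrightarrow> \<rho> \<in> carrier_mat m m"
  unfolding density_ops_def positive_op_def by auto

lemma density_ops_hermitian:
  "\<rho> \<in> density_ops m \<Longrightarrow> i < m \<Longrightarrow> j < m \<Longrightarrow> \<rho> $$ (j,i) = cnj (\<rho> $$ (i,j))"
  unfolding density_ops_def using positive_op_psd_kernel unfolding psd_kernel_def by blast

lemma mtrace_mult_gram:
  fixes T B :: "complex mat"
  assumes T: "T \<in> carrier_mat N N" and B: "B \<in> carrier_mat N N" and X: "\<And>g. X g \<in> carrier_vec N"
    and G: "\<And>I J. I < N \<Longrightarrow> J < N \<Longrightarrow> T $$ (I,J) = (\<Sum>g\<in>G. X g $ I * cnj (X g $ J))"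
  shows "mtrace (T * B) = (\<Sum>g\<in>G. cinner (X g) (B *\<^sub>v X g))"
proof -
  have "mtrace (T * B) = (\<Sum>I<N. \<Sum>J<N. \<Sum>g\<in>G. X g $ I * cnj (X g $ J) * B $$ (J,I))"
    using T B G by (simp add: mtrace_mult sum_distrib_right)
  also have "\<dots> = (\<Sum>g\<in>G. \<Sum>J<N. \<Sum>I<N. cnj (X g $ J) * B $$ (J,I) * X g $ I)"
    by (subst sum.swap, subst (2) sum.swap, subst sum.swap) (simp add: ac_simps)
  also have "\<dots> = (\<Sum>g\<in>G. cinner (X g) (B *\<^sub>v X g))"
    by (simp add: cinner_mult_mat_vec[OF B X X])
  finally show ?thesis .
qed

text \<open>The Gram vectors of $\rho^{\otimes n}$ are the tensor products of Gram vectors of $\rho$,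
  indexed by tuples $g$.\<close>

lemma tensor_pow_gram:
  assumes m: "m \<ge> 1" and pos: "positive_op m \<rho>"
  obtains X where "\<And>g. X g \<in> carrier_vec (m ^ n)"
    and "\<And>I J. I < m ^ n \<Longrightarrow> J < m ^ n \<Longrightarrow>
      tensor_pow m n \<rho> $$ (I,J) = (\<Sum>g \<in> Pi\<^sub>E {..<n} (\<lambda>_. {..<m}). X g $ I * cnj (X g $ J))"
proof -
  obtain w where w: "\<forall>a<m. \<forall>b<m. \<rho> $$ (a,b) = (\<Sum>j<m. w j a * cnj (w j b))"
    using positive_op_gram[OF pos] by blast
  define X where "X g = vec (m ^ n) (\<lambda>I. \<Prod>k<n. w (g k) (digit m k I))" for g
  have "tensor_pow m n \<rho> $$ (I,J) = (\<Sum>g \<in> Pi\<^sub>E {..<n} (\<lambda>_. {..<m}). X g $ I * cnj (X g $ J))"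
    if I: "I < m ^ n" and J: "J < m ^ n" for I J
  proof -
    have "tensor_pow m n \<rho> $$ (I,J) = (\<Prod>k<n. \<Sum>j<m. w j (digit m k I) * cnj (w j (digit m k J)))"
      using I J w digit_less[OF m] by (simp add: index_tensor_pow)
    also have "\<dots> = (\<Sum>g \<in> Pi\<^sub>E {..<n} (\<lambda>_. {..<m}).
        \<Prod>k<n. w (g k) (digit m k I) * cnj (w (g k) (digit m k J)))"
      by (rule prod_sum_PiE) auto
    finally show ?thesis unfolding X_def using I J by (simp add: prod.distrib)
  qed
  then show ?thesis using that[of X] unfolding X_def by simp
qed

lemma mtrace_tensor_pow_nonneg:
  assumes m: "m \<ge> 1" and \<rho>: "positive_op m \<rho>" and Q: "positive_op (m ^ n) Q"
  shows "Re (mtrace (tensor_pow m n \<rho> * Q)) \<ge> 0"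
proof -
  obtain X where X: "\<And>g. X g \<in> carrier_vec (m ^ n)"
    and G: "\<And>I J. I < m ^ n \<Longrightarrow> J < m ^ n \<Longrightarrow>
      tensor_pow m n \<rho> $$ (I,J) = (\<Sum>g \<in> Pi\<^sub>E {..<n} (\<lambda>_. {..<m}). X g $ I * cnj (X g $ J))"
    using tensor_pow_gram[OF m \<rho>] by blast
  have Qc: "Q \<in> carrier_mat (m ^ n) (m ^ n)" using Q unfolding positive_op_def by auto
  have "mtrace (tensor_pow m n \<rho> * Q) = (\<Sum>g \<in> Pi\<^sub>E {..<n} (\<lambda>_. {..<m}). cinner (X g) (Q *\<^sub>v X g))"
    by (rule mtrace_mult_gram[OF tensor_pow_carrier Qc X G])
  then show ?thesis using Q X unfolding positive_op_def by (auto simp: Re_sum intro!: sum_nonneg)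
qed

lemma mtrace_positive_nonneg:
  assumes X: "positive_op N X"
  shows "Re (mtrace X) \<ge> 0"
proof -
  have "X \<in> carrier_mat N N" using X unfolding positive_op_def by auto
  then show ?thesis
    using X unfolding positive_op_def by (auto simp: mtrace_eq_sum_cinner Re_sum intro!: sum_nonneg)
qed

lemma cinner_sandwich:
  assumes P: "P \<in> carrier_mat N N" "adj P = P" and Q: "Q \<in> carrier_mat N N" and x: "x \<in> carrier_vec N"
  shows "cinner x ((P * Q * P) *\<^sub>v x) = cinner (P *\<^sub>v x) (Q *\<^sub>v (P *\<^sub>v x))"
proof -
  have "(P * Q * P) *\<^sub>v x = P *\<^sub>v (Q *\<^sub>v (P *\<^sub>v x))"
    using P Q x by (simp add: assoc_mult_mat_vec[of _ N N _ N])
  then show ?thesis using cinner_adj[OF P(1) x, of "Q *\<^sub>v (P *\<^sub>v x)"] P Q x by simp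
qed

lemma positive_op_sandwich:
  assumes Q: "positive_op N Q" and P: "P \<in> carrier_mat N N" "adj P = P"
  shows "positive_op N (P * Q * P)"
proof -
  have Qc: "Q \<in> carrier_mat N N" using Q unfolding positive_op_def by auto
  have "Im (cinner v ((P * Q * P) *\<^sub>v v)) = 0 \<and> Re (cinner v ((P * Q * P) *\<^sub>v v)) \<ge> 0"
    if v: "v \<in> carrier_vec N" for v
    using Q P(1) v unfolding cinner_sandwich[OF P Qc v] positive_op_def by simp
  then show ?thesis using P Qc unfolding positive_op_def by simp
qed

context
  fixes N :: nat and K :: "complex vec set" and P :: "complex mat"
  assumes proj: "is_orth_proj N K P"
begin

lemma orth_proj_carrier: "P \<in> carrier_mat N N"
  using proj unfolding is_orth_proj_def by auto

lemma orth_proj_adj: "adj P = P"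
  using proj unfolding is_orth_proj_def by auto

lemma orth_proj_range: "v \<in> carrier_vec N \<Longrightarrow> P *\<^sub>v v \<in> K"
  using proj unfolding is_orth_proj_def by auto

lemma orth_proj_subspace_carrier: "v \<in> K \<Longrightarrow> v \<in> carrier_vec N"
  using proj orth_proj_carrier unfolding is_orth_proj_def by (auto intro: mult_mat_vec_carrier)

lemma orth_proj_fixes: "v \<in> K \<Longrightarrow> P *\<^sub>v v = v"
proof -
  assume "v \<in> K"
  then obtain x where x: "x \<in> carrier_vec N" "v = P *\<^sub>v x" using proj unfolding is_orth_proj_def by auto
  have "P *\<^sub>v v = (P * P) *\<^sub>v x" using x orth_proj_carrier by simp
  also have "P * P = P" using proj unfolding is_orth_proj_def by auto
  finally show ?thesis using x by simp
qed

lemma orth_proj_cinner: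
  "x \<in> carrier_vec N \<Longrightarrow> y \<in> carrier_vec N \<Longrightarrow> cinner x (P *\<^sub>v y) = cinner (P *\<^sub>v x) y"
  using cinner_adj[OF orth_proj_carrier] orth_proj_adj by metis

lemma orth_proj_positive: "positive_op N P"
proof -
  have "Im (cinner v (P *\<^sub>v v)) = 0 \<and> Re (cinner v (P *\<^sub>v v)) \<ge> 0" if v: "v \<in> carrier_vec N" for v
  proof -
    have Pv: "P *\<^sub>v v \<in> carrier_vec N" using v orth_proj_carrier by simp
    have "cinner v (P *\<^sub>v v) = cinner v (P *\<^sub>v (P *\<^sub>v v))"
      using orth_proj_fixes[OF orth_proj_range[OF v]] by simp
    also have "\<dots> = cinner (P *\<^sub>v v) (P *\<^sub>v v)" using orth_proj_cinner[OF v Pv] by simp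
    finally show ?thesis using cinner_self_nonneg[OF Pv] by simp
  qed
  then show ?thesis unfolding positive_op_def using orth_proj_carrier by auto
qed

end

lemma mtrace_sandwich_expand:
  fixes A P1 Q P2 :: "complex mat"
  assumes A: "A \<in> carrier_mat N N" and P1: "P1 \<in> carrier_mat N N" and Q: "Q \<in> carrier_mat N N"
    and P2: "P2 \<in> carrier_mat N N" "adj P2 = P2"
  shows "mtrace (A * (P1 * Q * P2)) =
    (\<Sum>c<N. \<Sum>d<N. Q $$ (c,d) * cinner (P2 *\<^sub>v unit_vec N d) (A *\<^sub>v (P1 *\<^sub>v unit_vec N c)))"
proof -
  have "mtrace (A * (P1 * Q * P2)) = mtrace (P2 * (A * (P1 * Q)))"
    using mtrace_mult_comm[of "A * (P1 * Q)" N P2] A P1 Q P2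
    by (simp add: assoc_mult_mat[of _ N N _ N _ N])
  also have "\<dots> = mtrace (Q * (P2 * (A * P1)))"
    using mtrace_mult_comm[of "P2 * (A * P1)" N Q] A P1 Q P2
    by (simp add: assoc_mult_mat[of _ N N _ N _ N])
  also have "\<dots> = (\<Sum>c<N. \<Sum>d<N. Q $$ (c,d) * (P2 * (A * P1)) $$ (d,c))"
    by (rule mtrace_mult) (use A P1 Q P2 in auto)
  also have "\<dots> = (\<Sum>c<N. \<Sum>d<N. Q $$ (c,d) * cinner (P2 *\<^sub>v unit_vec N d) (A *\<^sub>v (P1 *\<^sub>v unit_vec N c)))"
  proof (intro sum.cong refl arg_cong2[where f="(*)"])
    fix c d assume c: "c \<in> {..<N}" and d: "d \<in> {..<N}"
    have "P2 *\<^sub>v unit_vec N d = adj P2 *\<^sub>v unit_vec N d" using P2 by simp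
    then have "cinner (P2 *\<^sub>v unit_vec N d) (A *\<^sub>v (P1 *\<^sub>v unit_vec N c)) =
        cinner (unit_vec N d) (P2 *\<^sub>v (A *\<^sub>v (P1 *\<^sub>v unit_vec N c)))"
      using cinner_adj[OF P2(1) unit_vec_carrier, of "A *\<^sub>v (P1 *\<^sub>v unit_vec N c)" d] A P1 by simp
    also have "\<dots> = ((P2 * (A * P1)) *\<^sub>v unit_vec N c) $ d"
      using A P1 P2 d by (simp add: cinner_unit_vec assoc_mult_mat_vec[of _ N N _ N])
    also have "\<dots> = (P2 * (A * P1)) $$ (d,c)"
      using A P1 P2 c d by (intro mult_mat_unit_vec) auto
    finally show "(P2 * (A * P1)) $$ (d,c) =
        cinner (P2 *\<^sub>v unit_vec N d) (A *\<^sub>v (P1 *\<^sub>v unit_vec N c))" by simp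
  qed
  finally show ?thesis .
qed

text \<open>A Hermitian $T$ that preserves $K$ also preserves $K^\perp$, so it has no matrix elements
  between $K$ and $K^\perp$.\<close>

lemma cinner_block_diagonal:
  fixes T P P' :: "complex mat"
  assumes P: "is_orth_proj N K P" and P': "is_orth_proj N K' P'" and one: "P + P' = 1\<^sub>m N"
    and orth: "\<And>x y. x \<in> K \<Longrightarrow> y \<in> K' \<Longrightarrow> cinner x y = 0"
    and T: "T \<in> carrier_mat N N" "adj T = T" and TK: "\<And>v. v \<in> K \<Longrightarrow> T *\<^sub>v v \<in> K"
    and x: "x \<in> carrier_vec N" and y: "y \<in> carrier_vec N"
  shows "cinner y (T *\<^sub>v x) = cinner (P *\<^sub>v y) (T *\<^sub>v (P *\<^sub>v x)) + cinner (P' *\<^sub>v y) (T *\<^sub>v (P' *\<^sub>v x))"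
proof -
  note Pc = orth_proj_carrier[OF P] and P'c = orth_proj_carrier[OF P']
  have split: "v = P *\<^sub>v v + P' *\<^sub>v v" if "v \<in> carrier_vec N" for v
    using add_mult_distrib_mat_vec[OF Pc P'c that] one that by simp
  let ?px = "P *\<^sub>v x" and ?qx = "P' *\<^sub>v x" and ?py = "P *\<^sub>v y" and ?qy = "P' *\<^sub>v y"
  have K: "?px \<in> K" "?py \<in> K" and K': "?qx \<in> K'" "?qy \<in> K'"
    using orth_proj_range[OF P] orth_proj_range[OF P'] x y by auto
  have cc: "?px \<in> carrier_vec N" "?qx \<in> carrier_vec N" "?py \<in> carrier_vec N" "?qy \<in> carrier_vec N"
    using Pc P'c x y by auto
  have "cinner ?qy (T *\<^sub>v ?px) = cnj (cinner (T *\<^sub>v ?px) ?qy)"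
    using cinner_cnj[OF cc(4)] T cc by simp
  then have z1: "cinner ?qy (T *\<^sub>v ?px) = 0" using orth[OF TK[OF K(1)] K'(2)] by simp
  have "cinner ?py (T *\<^sub>v ?qx) = cinner (T *\<^sub>v ?py) ?qx"
    using cinner_adj[OF T(1) cc(3) cc(2)] T(2) by simp
  then have z2: "cinner ?py (T *\<^sub>v ?qx) = 0" using orth[OF TK[OF K(2)] K'(1)] by simp
  have "cinner y (T *\<^sub>v x) = cinner (?py + ?qy) (T *\<^sub>v ?px + T *\<^sub>v ?qx)"
    using split[OF x] split[OF y] mult_add_distrib_mat_vec[OF T(1) cc(1,2)] by metis
  also have "\<dots> = cinner ?py (T *\<^sub>v ?px) + cinner ?qy (T *\<^sub>v ?px) +
      (cinner ?py (T *\<^sub>v ?qx) + cinner ?qy (T *\<^sub>v ?qx))"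
    using cc T by (simp add: cinner_add_left[of _ N] cinner_add_right[of _ N])
  finally show ?thesis using z1 z2 by simp
qed

lemma mtrace_block_diagonal:
  fixes T Q P P' :: "complex mat"
  assumes P: "is_orth_proj N K P" and P': "is_orth_proj N K' P'" and one: "P + P' = 1\<^sub>m N"
    and orth: "\<And>x y. x \<in> K \<Longrightarrow> y \<in> K' \<Longrightarrow> cinner x y = 0"
    and T: "T \<in> carrier_mat N N" "adj T = T" and TK: "\<And>v. v \<in> K \<Longrightarrow> T *\<^sub>v v \<in> K"
    and Q: "Q \<in> carrier_mat N N"
  shows "mtrace (T * Q) = mtrace (T * (P * Q * P)) + mtrace (T * (P' * Q * P'))"
proof -
  let ?e = "unit_vec N"
  note Pc = orth_proj_carrier[OF P] and P'c = orth_proj_carrier[OF P']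
  have "mtrace (T * Q) = mtrace (T * (1\<^sub>m N * Q * 1\<^sub>m N))" using Q by simp
  also have "\<dots> = (\<Sum>c<N. \<Sum>d<N. Q $$ (c,d) * cinner (?e d) (T *\<^sub>v ?e c))"
    using mtrace_sandwich_expand[OF T(1) one_carrier_mat Q one_carrier_mat adj_one] by simp
  also have "\<dots> = (\<Sum>c<N. \<Sum>d<N. Q $$ (c,d) * cinner (P *\<^sub>v ?e d) (T *\<^sub>v (P *\<^sub>v ?e c)))
      + (\<Sum>c<N. \<Sum>d<N. Q $$ (c,d) * cinner (P' *\<^sub>v ?e d) (T *\<^sub>v (P' *\<^sub>v ?e c)))"
    using cinner_block_diagonal[OF P P' one orth T TK] by (simp add: distrib_left sum.distrib)
  also have "\<dots> = mtrace (T * (P * Q * P)) + mtrace (T * (P' * Q * P'))"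
    using mtrace_sandwich_expand[OF T(1) Pc Q Pc orth_proj_adj[OF P]]
      mtrace_sandwich_expand[OF T(1) P'c Q P'c orth_proj_adj[OF P']] by simp
  finally show ?thesis .
qed

section \<open>Householder reflections\<close>

definition householder :: "nat \<Rightarrow> complex vec \<Rightarrow> complex mat" where
  "householder N w =
    Matrix.mat N N (\<lambda>(i,j). (if i = j then 1 else 0) - 2 / cinner w w * w $ i * cnj (w $ j))"

lemma householder_carrier[simp]: "householder N w \<in> carrier_mat N N"
  unfolding householder_def by simp

lemma householder_dim[simp]: "dim_row (householder N w) = N" "dim_col (householder N w) = N"
  unfolding householder_def by simp_all

lemma householder_mult_vec:
  assumes w: "w \<in> carrier_vec N" and v: "v \<in> carrier_vec N"
  shows "householder N w *\<^sub>v v = v - (2 / cinner w w * cinner w v) \<cdot>\<^sub>v w"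
proof (rule eq_vecI)
  fix i assume "i < dim_vec (v - (2 / cinner w w * cinner w v) \<cdot>\<^sub>v w)"
  then have i: "i < N" using w by simp
  have "(householder N w *\<^sub>v v) $ i = (\<Sum>j<N. householder N w $$ (i,j) * v $ j)"
    by (rule mult_mat_vec_sum[OF householder_carrier v i])
  also have "\<dots> = (\<Sum>j<N. (if i = j then v $ j else 0) - 2 / cinner w w * w $ i * (cnj (w $ j) * v $ j))"
    using i by (intro sum.cong refl)
      (case_tac "i = x"; simp add: householder_def left_diff_distrib mult.assoc)
  also have "\<dots> = v $ i - 2 / cinner w w * w $ i * cinner w v"
    using i w by (simp add: sum_subtractf cinner_carrier sum_distrib_left)
  finally show "(householder N w *\<^sub>v v) $ i = (v - (2 / cinner w w * cinner w v) \<cdot>\<^sub>v w) $ i"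
    using i v w by simp
qed (use w v in simp)

lemma householder_unitary:
  assumes w: "w \<in> carrier_vec N" and w0: "w \<noteq> 0\<^sub>v N"
  shows "adj (householder N w) = householder N w" and "unitary_mat N (householder N w)"
proof -
  let ?H = "householder N w" and ?k = "2 / cinner w w"
  have ww: "cinner w w \<noteq> 0" using cinner_self_eq_0[OF w] w0 by auto
  have "cnj (cinner w w) = cinner w w" using cinner_self_nonneg[OF w] by (simp add: complex_eq_iff)
  then have k: "cnj ?k = ?k" by simp
  show adj: "adj ?H = ?H"
    by (rule eq_matI) (use k in \<open>auto simp: adj_def householder_def mult.commute\<close>)
  have "(?H * ?H) *\<^sub>v v = 1\<^sub>m N *\<^sub>v v" if v: "v \<in> carrier_vec N" for v
  proof -
    have kw: "?k * cinner w w = 2" using ww by simp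
    have Hv: "?H *\<^sub>v v \<in> carrier_vec N" by (rule mult_mat_vec_carrier[OF householder_carrier v])
    have Hw: "cinner w (?H *\<^sub>v v) = - cinner w v"
      using w v kw ww by (simp add: householder_mult_vec cinner_diff_right[of _ N]
          cinner_smult_right[of _ N]
          algebra_simps)
    have "?H *\<^sub>v (?H *\<^sub>v v) = ?H *\<^sub>v v - (?k * cinner w (?H *\<^sub>v v)) \<cdot>\<^sub>v w"
      by (rule householder_mult_vec[OF w Hv])
    also have "\<dots> = v"
      using Hw w v unfolding householder_mult_vec[OF w v] by (intro eq_vecI) (auto simp: algebra_simps)
    finally have "?H *\<^sub>v (?H *\<^sub>v v) = v" .
    then show ?thesis using v by (simp add: assoc_mult_mat_vec[of _ N N _ N])
  qed
  then have "?H * ?H = 1\<^sub>m N" by (intro mat_eq_by_mult_vec[of _ N]) auto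
  then show "unitary_mat N ?H" unfolding unitary_mat_def adj by simp
qed

text \<open>Reflecting in $w = u - c\,e_0$ maps $u$ to $c\,e_0$ as soon as
  $\langle w,w\rangle = 2\langle w,u\rangle$; this holds when $|c| = \|u\|$ and $c$ has the phase of $u_0$.\<close>

lemma householder_target:
  assumes m: "m \<ge> 1" and u: "u \<in> carrier_vec m"
  obtains c where "cnj c * c = cinner u u"
    and "cinner (u - c \<cdot>\<^sub>v unit_vec m 0) (u - c \<cdot>\<^sub>v unit_vec m 0) = 2 * cinner (u - c \<cdot>\<^sub>v unit_vec m 0) u"
proof -
  define r where "r = cmod (u $ 0)"
  define nu where "nu = sqrt (Re (cinner u u))"
  define lam where "lam = (if u $ 0 = 0 then 1 else u $ 0 / complex_of_real r)"
  define c where "c = complex_of_real nu * lam"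
  define e where "e = (unit_vec m 0 :: complex vec)"
  define w where "w = u - c \<cdot>\<^sub>v e"
  have uu: "cinner u u = complex_of_real (nu * nu)"
    using cinner_self_nonneg[OF u] unfolding nu_def by (simp add: complex_eq_iff)
  have lam: "cnj lam * lam = 1" "cnj lam * u $ 0 = complex_of_real r"
    using complex_norm_square[of "u $ 0"]
    by (auto simp: lam_def r_def field_simps power2_eq_square mult.commute)
  have cc: "cnj c * c = cinner u u" using lam(1) uu unfolding c_def by (simp add: algebra_simps)
  have e: "e \<in> carrier_vec m" and ce: "c \<cdot>\<^sub>v e \<in> carrier_vec m" unfolding e_def by simp_all
  have wc: "w \<in> carrier_vec m" unfolding w_def using u e by simp
  have eu: "cinner e u = u $ 0" "cinner e e = 1" using m u by (simp_all add: e_def cinner_unit_vec)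
  have ue: "cinner u e = cnj (u $ 0)" using cinner_cnj[OF u e] eu by simp
  have wu: "cinner w u = cinner u u - cnj c * u $ 0"
    unfolding w_def using u e eu by (simp add: cinner_diff_left[OF u ce] cinner_smult_left[OF e])
  have we: "cinner w e = cnj (u $ 0) - cnj c"
    unfolding w_def using u e eu ue by (simp add: cinner_diff_left[OF u ce] cinner_smult_left[OF e])
  have "cinner w w = cinner w u - c * cinner w e"
    using cinner_diff_right[OF wc u ce] cinner_smult_right[OF wc e] by (simp add: w_def)
  then have ww: "cinner w w = cinner u u - cnj c * u $ 0 - c * cnj (u $ 0) + cnj c * c"
    unfolding wu we by (simp add: algebra_simps)
  have "lam * cnj (u $ 0) = complex_of_real r" using arg_cong[OF lam(2), of cnj] by simp
  then have "cnj c * u $ 0 = c * cnj (u $ 0)" using lam(2) unfolding c_def by (simp add: mult.assoc)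
  then have "cinner w w = 2 * cinner w u" unfolding ww wu cc by simp
  then show ?thesis using that cc unfolding w_def e_def by blast
qed

lemma unitary_to_unit_vec:
  assumes m: "m \<ge> 1" and u: "u \<in> carrier_vec m"
  shows "\<exists>U c. unitary_mat m U \<and> adj U *\<^sub>v u = c \<cdot>\<^sub>v unit_vec m 0 \<and> cnj c * c = cinner u u"
proof -
  obtain c where cc: "cnj c * c = cinner u u"
    and key: "cinner (u - c \<cdot>\<^sub>v unit_vec m 0) (u - c \<cdot>\<^sub>v unit_vec m 0) =
        2 * cinner (u - c \<cdot>\<^sub>v unit_vec m 0) u"
    using householder_target[OF m u] by blast
  define w where "w = u - c \<cdot>\<^sub>v unit_vec m 0"
  have wc: "w \<in> carrier_vec m" unfolding w_def using u by simp
  have uw: "u - w = c \<cdot>\<^sub>v unit_vec m 0" unfolding w_def using u by (intro eq_vecI) auto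
  show ?thesis
  proof (cases "w = 0\<^sub>v m")
    case True
    then have "1\<^sub>m m *\<^sub>v u = c \<cdot>\<^sub>v unit_vec m 0" using uw u by simp
    moreover have "unitary_mat m (1\<^sub>m m)" by (simp add: unitary_mat_def adj_one)
    ultimately show ?thesis using cc by (metis adj_one)
  next
    case False
    have "cinner w w \<noteq> 0" using cinner_self_eq_0[OF wc] False by blast
    then have "2 / cinner w w * cinner w u = 1" using key unfolding w_def by auto
    then have "householder m w *\<^sub>v u = c \<cdot>\<^sub>v unit_vec m 0"
      using householder_mult_vec[OF wc u] uw by simp
    then show ?thesis using householder_unitary[OF wc False] cc by metis
  qed
qed

section \<open>Roots of unity and the symmetric subspace\<close>

definition unit_root :: "nat \<Rightarrow> complex" where
  "unit_root R = exp (2 * of_real pi * \<i> / of_nat R)"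

lemma unit_root_pow: "unit_root R ^ k = exp (2 * of_real pi * \<i> * of_nat k / of_nat R)"
  unfolding unit_root_def exp_of_nat_mult[symmetric] by (simp add: field_simps)

lemma unit_root_pow_eq_1: "R \<ge> 1 \<Longrightarrow> unit_root R ^ k = 1 \<longleftrightarrow> R dvd k"
  unfolding unit_root_pow by (rule complex_root_unity_eq_1)

lemma cnj_unit_root_pow_mult: "cnj (unit_root R ^ k) * unit_root R ^ k = 1"
proof -
  have "cmod (unit_root R ^ k) = 1" unfolding unit_root_pow by (simp add: norm_exp_eq_Re)
  then have "complex_of_real ((cmod (unit_root R ^ k))\<^sup>2) = 1" by simp
  then show ?thesis unfolding complex_norm_square by (simp add: mult.commute)
qed

lemma sum_unit_root_pow:
  assumes R: "R \<ge> 1"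
  shows "(\<Sum>j<R. (unit_root R ^ k) ^ j) = (if R dvd k then of_nat R else 0)"
proof (cases "R dvd k")
  case True
  then have "unit_root R ^ k = 1" using unit_root_pow_eq_1[OF R] by simp
  then show ?thesis using True by simp
next
  case False
  then have ne: "unit_root R ^ k \<noteq> 1" using unit_root_pow_eq_1[OF R] by simp
  have "(unit_root R ^ k) ^ R = (unit_root R ^ R) ^ k" by (simp add: power_mult[symmetric] mult.commute)
  also have "unit_root R ^ R = 1" using unit_root_pow_eq_1[OF R] by simp
  finally have "(unit_root R ^ k) ^ R = 1" by simp
  then show ?thesis using ne False by (simp add: sum_gp_strict)
qed

lemma sum_poly_unit_roots:
  assumes "degree P < R"
  shows "(\<Sum>j<R. poly P (unit_root R ^ j)) = of_nat R * coeff P 0"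
proof -
  have R: "R \<ge> 1" using assms by simp
  have "(\<Sum>j<R. poly P (unit_root R ^ j)) = (\<Sum>j<R. \<Sum>i\<le>degree P. coeff P i * (unit_root R ^ i) ^ j)"
    by (simp add: poly_altdef power_mult[symmetric] mult.commute)
  also have "\<dots> = (\<Sum>i\<le>degree P. coeff P i * (\<Sum>j<R. (unit_root R ^ i) ^ j))"
    by (subst sum.swap) (simp add: sum_distrib_left)
  also have "\<dots> = (\<Sum>i\<le>degree P. if i = 0 then coeff P 0 * of_nat R else 0)"
  proof (intro sum.cong refl)
    fix i assume "i \<in> {..degree P}"
    then have "R dvd i \<longleftrightarrow> i = 0" using assms by (auto dest: dvd_imp_le)
    then show "coeff P i * (\<Sum>j<R. (unit_root R ^ i) ^ j) = (if i = 0 then coeff P 0 * of_nat R else 0)"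
      using sum_unit_root_pow[OF R, of i] by auto
  qed
  finally show ?thesis by (simp add: mult.commute)
qed

text \<open>Polarization: $z^n (p + z b + \bar z c)^n = (c + z p + z^2 b)^n$ on the unit circle, and averaging
  over the $(2n+1)$-th roots of unity keeps only its constant coefficient.\<close>

lemma unit_root_polarization:
  fixes p b c :: complex and n :: nat
  defines "R \<equiv> 2 * n + 1"
  shows "(\<Sum>j<R. (unit_root R ^ j) ^ n * (p + unit_root R ^ j * b + cnj (unit_root R ^ j) * c) ^ n) =
      of_nat R * c ^ n"
proof -
  define P where "P = [:c, p, b:] ^ n"
  have "degree P \<le> degree [:c, p, b:] * n" unfolding P_def by (rule degree_power_le)
  also have "\<dots> \<le> 2 * n" using degree_pCons_le[of c "[:p, b:]"] by (simp add: degree_pCons_le)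
  finally have degP: "degree P < R" unfolding R_def by simp
  have "(unit_root R ^ j) ^ n * (p + unit_root R ^ j * b + cnj (unit_root R ^ j) * c) ^ n =
      poly P (unit_root R ^ j)" for j
  proof -
    let ?z = "unit_root R ^ j"
    have "?z ^ n * (p + ?z * b + cnj ?z * c) ^ n = (?z * (p + ?z * b + cnj ?z * c)) ^ n"
      by (simp add: power_mult_distrib)
    also have "?z * (p + ?z * b + cnj ?z * c) = c + ?z * (p + ?z * b)"
      using cnj_unit_root_pow_mult[of R j] by (simp add: algebra_simps)
    finally show ?thesis unfolding P_def by (simp add: algebra_simps)
  qed
  then show ?thesis
    using sum_poly_unit_roots[OF degP] unfolding P_def by (simp add: poly_0_coeff_0[symmetric])
qed

lemma dvd_shift_iff:
  fixes x y R :: nat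
  assumes "x < R" "y < R"
  shows "R dvd (R - x + y) \<longleftrightarrow> x = y"
proof (cases "x \<le> y")
  case True
  then have e: "R - x + y = R + (y - x)" using assms by simp
  have "R dvd (R + (y - x)) \<longleftrightarrow> R dvd (y - x)" by (simp add: dvd_add_right_iff)
  also have "\<dots> \<longleftrightarrow> y - x = 0"
  proof
    assume "R dvd (y - x)"
    moreover have "y - x < R" using assms by simp
    ultimately show "y - x = 0" by (metis dvd_imp_le not_less neq0_conv)
  qed simp
  finally show ?thesis using e True by auto
next
  case False
  then have t: "0 < R - x + y" "R - x + y < R" using assms by auto
  then have "\<not> R dvd (R - x + y)" by (metis dvd_imp_le not_less)
  then show ?thesis using False by auto
qed

text \<open>The occupation code of a basis index of $H^{\otimes n}$ writes, in base $n+1$, how many tensor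
  factors carry each basis vector of $H$; two indices have the same code iff they differ by a
  permutation of the factors.\<close>

definition occupation_code :: "nat \<Rightarrow> nat \<Rightarrow> nat \<Rightarrow> nat" where
  "occupation_code m n I = (\<Sum>k<n. (n + 1) ^ digit m k I)"

definition occupation :: "nat \<Rightarrow> nat \<Rightarrow> nat \<Rightarrow> nat \<Rightarrow> nat" where
  "occupation m n a I = card {k. k < n \<and> digit m k I = a}"

lemma sum_comp_eq_sum_fibres:
  fixes f :: "nat \<Rightarrow> 'a::comm_semiring_1" and g :: "nat \<Rightarrow> nat" and n m :: nat
  assumes "\<And>k. k < n \<Longrightarrow> g k < m"
  shows "(\<Sum>k<n. f (g k)) = (\<Sum>a<m. of_nat (card {k. k < n \<and> g k = a}) * f a)"
proof -
  have "(\<Sum>k<n. f (g k)) = (\<Sum>k<n. \<Sum>a<m. if g k = a then f a else 0)"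
    using assms by (intro sum.cong refl) (simp add: sum.delta)
  also have "\<dots> = (\<Sum>a<m. \<Sum>k<n. if g k = a then f a else 0)" by (rule sum.swap)
  also have "\<dots> = (\<Sum>a<m. of_nat (card {k. k < n \<and> g k = a}) * f a)"
  proof (intro sum.cong refl)
    fix a
    have "(\<Sum>k<n. if g k = a then f a else 0) =
        (\<Sum>k\<in>{..<n} \<inter> {k. g k = a}. f a) + (\<Sum>k\<in>{..<n} \<inter> - {k. g k = a}. 0)"
      by (rule sum.If_cases) simp
    then have "(\<Sum>k<n. if g k = a then f a else 0) = of_nat (card ({..<n} \<inter> {k. g k = a})) * f a"
      by simp
    also have "{..<n} \<inter> {k. g k = a} = {k. k < n \<and> g k = a}" by auto
    finally show "(\<Sum>k<n. if g k = a then f a else 0) = of_nat (card {k. k < n \<and> g k = a}) * f a"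
      by simp
  qed
  finally show ?thesis .
qed

lemma occupation_code_eq_sum: "m \<ge> 1 \<Longrightarrow> occupation_code m n I = (\<Sum>a<m. occupation m n a I * (n + 1) ^ a)"
  unfolding occupation_code_def occupation_def
    using sum_comp_eq_sum_fibres[of n "\<lambda>k. digit m k I" m "\<lambda>a. (n + 1) ^ a"] digit_less
  by simp

lemma occupation_le: "occupation m n a I \<le> n"
proof -
  have "occupation m n a I \<le> card {..<n}" unfolding occupation_def by (intro card_mono) auto
  then show ?thesis by simp
qed

lemma digit_occupation_code: "m \<ge> 1 \<Longrightarrow> a < m \<Longrightarrow> digit (n + 1) a (occupation_code m n I) = occupation m n a I"
  unfolding occupation_code_eq_sum using occupation_le
    by (intro digit_base_sum) (auto simp: le_imp_less_Suc)

lemma occupation_code_less: "m \<ge> 1 \<Longrightarrow> occupation_code m n I < (n + 1) ^ m"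
  unfolding occupation_code_eq_sum using occupation_le by (intro base_sum_less) (auto simp: le_imp_less_Suc)

lemma count_list_filter: "count_list xs x = length (filter (\<lambda>y. y = x) xs)"
  by (induct xs) auto

lemma occupation_code_eq_imp_perm:
  assumes m: "m \<ge> 1" and I: "I < m ^ n" and K: "K < m ^ n"
    and e: "occupation_code m n I = occupation_code m n K"
  obtains p where "p permutes {..<n}" "perm_idx m n p I = K"
proof -
  define xs where "xs = map (\<lambda>k. digit m k K) [0..<n]"
  define ys where "ys = map (\<lambda>k. digit m k I) [0..<n]"
  have cntI: "count (mset ys) a = occupation m n a I" for a
    unfolding ys_def occupation_def count_mset count_list_filter length_filter_conv_card
      by (auto intro!: arg_cong[where f=card])
  have cntK: "count (mset xs) a = occupation m n a K" for a
    unfolding xs_def occupation_def count_mset count_list_filter length_filter_conv_card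
      by (auto intro!: arg_cong[where f=card])
  have "occupation m n a I = occupation m n a K" for a
  proof (cases "a < m")
    case True
    then show ?thesis
      using digit_occupation_code[OF m True, of n I] digit_occupation_code[OF m True, of n K] e by simp
  next
    case False
    then have "occupation m n a I = 0" "occupation m n a K = 0" unfolding occupation_def
      using digit_less[OF m] by (auto intro: leD)
    then show ?thesis by simp
  qed
  then have "mset xs = mset ys" using cntI cntK by (simp add: multiset_eq_iff)
  then obtain p where p: "p permutes {..<length ys}" "permute_list p ys = xs" by (rule mset_eq_permutation)
  have pn: "p permutes {..<n}" using p(1) unfolding ys_def by simp
  have "digit m k (perm_idx m n p I) = digit m k K" if k: "k < n" for k
  proof -
    have "xs ! k = ys ! (p k)" using p permute_list_nth[of p ys k] k unfolding ys_def by auto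
    moreover have "p k < n" using permutes_in_image[OF pn, of k] k by simp
    ultimately have "digit m k K = digit m (p k) I" using k unfolding xs_def ys_def by simp
    then show ?thesis using digit_perm_idx[OF m pn k] by simp
  qed
  then have "perm_idx m n p I = K" using digits_eq_imp_eq[OF perm_idx_less[OF m] K] by blast
  then show ?thesis using that pn by blast
qed

lemma sym_subspace_occupation_code:
  assumes m: "m \<ge> 1" and v: "v \<in> sym_subspace m n" and I: "I < m ^ n" and K: "K < m ^ n"
    and e: "occupation_code m n I = occupation_code m n K"
  shows "v $ I = v $ K"
proof -
  obtain p where p: "p permutes {..<n}" "perm_idx m n p I = K"
    using occupation_code_eq_imp_perm[OF m I K e] by blast
  then show ?thesis using v I unfolding sym_subspace_def by auto
qed

definition probe_vec :: "nat \<Rightarrow> nat \<Rightarrow> nat \<Rightarrow> complex vec" where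
  "probe_vec m n j = vec m (\<lambda>x. (unit_root ((n + 1) ^ m) ^ j) ^ ((n + 1) ^ x))"

lemma probe_vec_carrier[simp]: "probe_vec m n j \<in> carrier_vec m" unfolding probe_vec_def by simp

lemma index_tensor_vec_probe: "m \<ge> 1 \<Longrightarrow> I < m ^ n \<Longrightarrow>
    tensor_vec m n (probe_vec m n j) $ I = (unit_root ((n + 1) ^ m) ^ j) ^ occupation_code m n I"
  unfolding occupation_code_def using digit_less by (simp add: index_tensor_vec probe_vec_def power_sum)

lemma unit_root_fourier_inversion:
  assumes R: "R \<ge> 1" and y: "y < R"
  shows "(\<Sum>j<R. (\<Sum>x<R. g x * (unit_root R ^ j) ^ (R - x)) / of_nat R * (unit_root R ^ j) ^ y) = g y"
proof -
  let ?z = "unit_root R"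
  have pw: "(?z ^ j) ^ a * (?z ^ j) ^ b = (?z ^ (a + b)) ^ j" for j a b
    by (simp only: power_mult[symmetric] power_add[symmetric]) (simp add: algebra_simps)
  have "(\<Sum>j<R. (\<Sum>x<R. g x * (?z ^ j) ^ (R - x)) / of_nat R * (?z ^ j) ^ y) =
      (\<Sum>j<R. \<Sum>x<R. g x / of_nat R * ((?z ^ j) ^ (R - x) * (?z ^ j) ^ y))"
    by (simp add: sum_distrib_left sum_distrib_right sum_divide_distrib ac_simps)
  also have "\<dots> = (\<Sum>j<R. \<Sum>x<R. g x / of_nat R * (?z ^ (R - x + y)) ^ j)"
    by (simp only: pw)
  also have "\<dots> = (\<Sum>x<R. g x / of_nat R * (\<Sum>j<R. (?z ^ (R - x + y)) ^ j))"
    by (subst sum.swap) (simp add: sum_distrib_left)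
  also have "\<dots> = (\<Sum>x<R. if x = y then g y else 0)"
    using sum_unit_root_pow[OF R] dvd_shift_iff[OF _ y] R by (intro sum.cong refl) auto
  finally show ?thesis using y by simp
qed

text \<open>The product vectors $\varphi_j^{\otimes n}$, $\varphi_j = (\zeta^{j (n+1)^a})_a$ with $\zeta$ a
  primitive $(n+1)^m$-th root of unity, are the characters of the occupation code, and symmetric
  vectors are functions of the occupation code; Fourier inversion expresses them in these
  product vectors.\<close>

lemma sym_subspace_span:
  assumes m: "m \<ge> 1" and v: "v \<in> sym_subspace m n"
  shows "\<exists>a. \<forall>K < m ^ n. v $ K = (\<Sum>j<(n + 1) ^ m. a j * tensor_vec m n (probe_vec m n j) $ K)"
proof -
  define R where "R = (n + 1) ^ m"
  define g where "g x = (if \<exists>I<m ^ n. occupation_code m n I = x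
    then v $ (SOME I. I < m ^ n \<and> occupation_code m n I = x) else 0)" for x
  define a where "a j = (\<Sum>x<R. g x * (unit_root R ^ j) ^ (R - x)) / of_nat R" for j
  have "v $ K = (\<Sum>j<R. a j * tensor_vec m n (probe_vec m n j) $ K)" if K: "K < m ^ n" for K
  proof -
    let ?P = "\<lambda>I. I < m ^ n \<and> occupation_code m n I = occupation_code m n K"
    have "?P (SOME I. ?P I)" by (rule someI_ex) (use K in blast)
    then have "v $ (SOME I. ?P I) = v $ K" using sym_subspace_occupation_code[OF m v _ K] by blast
    moreover have "\<exists>I<m ^ n. occupation_code m n I = occupation_code m n K" using K by blast
    ultimately have gK: "g (occupation_code m n K) = v $ K" unfolding g_def by presburger
    have "(\<Sum>j<R. a j * tensor_vec m n (probe_vec m n j) $ K) =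
        (\<Sum>j<R. a j * (unit_root R ^ j) ^ occupation_code m n K)"
      unfolding R_def by (intro sum.cong refl arg_cong2[where f="(*)"] index_tensor_vec_probe[OF m K])
    also have "\<dots> = g (occupation_code m n K)"
      unfolding a_def using occupation_code_less[OF m] unfolding R_def
      by (intro unit_root_fourier_inversion) auto
    finally show ?thesis using gK by simp
  qed
  then show ?thesis unfolding R_def by blast
qed

section \<open>Linear combinations of the forms $A \mapsto \langle u, A u\rangle^n$\<close>

definition power_form_span :: "nat \<Rightarrow> nat \<Rightarrow> (complex mat \<Rightarrow> complex) \<Rightarrow> bool" where
  "power_form_span m n F \<longleftrightarrow> (\<exists>xs. (\<forall>p\<in>set xs. snd p \<in> carrier_vec m) \<and>
     (\<forall>A\<in>carrier_mat m m. F A = sum_list (map (\<lambda>p. fst p * (cinner (snd p) (A *\<^sub>v snd p)) ^ n) xs)))"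

lemma power_form_span_zero: "power_form_span m n (\<lambda>A. 0)"
  unfolding power_form_span_def by (rule exI[of _ "[]"]) simp

lemma power_form_span_add: "power_form_span m n F \<Longrightarrow> power_form_span m n G \<Longrightarrow>
    power_form_span m n (\<lambda>A. F A + G A)"
  unfolding power_form_span_def
proof (elim exE conjE)
  fix xs ys assume "\<forall>p\<in>set xs. snd p \<in> carrier_vec m" "\<forall>p\<in>set ys. snd p \<in> carrier_vec m"
    "\<forall>A\<in>carrier_mat m m. F A = sum_list (map (\<lambda>p. fst p * (cinner (snd p) (A *\<^sub>v snd p)) ^ n) xs)"
    "\<forall>A\<in>carrier_mat m m. G A = sum_list (map (\<lambda>p. fst p * (cinner (snd p) (A *\<^sub>v snd p)) ^ n) ys)"
  then show "\<exists>zs. (\<forall>p\<in>set zs. snd p \<in> carrier_vec m) \<and>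
     (\<forall>A\<in>carrier_mat m m. F A + G A = sum_list (map (\<lambda>p. fst p * (cinner (snd p) (A *\<^sub>v snd p)) ^ n) zs))"
    by (intro exI[of _ "xs @ ys"]) auto
qed

lemma power_form_span_scale: "power_form_span m n F \<Longrightarrow> power_form_span m n (\<lambda>A. k * F A)"
  unfolding power_form_span_def
proof (elim exE conjE)
  fix xs assume a: "\<forall>p\<in>set xs. snd p \<in> carrier_vec m"
    "\<forall>A\<in>carrier_mat m m. F A = sum_list (map (\<lambda>p. fst p * (cinner (snd p) (A *\<^sub>v snd p)) ^ n) xs)"
  have "sum_list (map (\<lambda>p. fst p * (cinner (snd p) (A *\<^sub>v snd p)) ^ n) (map (\<lambda>p. (k * fst p, snd p)) xs))
     = k * sum_list (map (\<lambda>p. fst p * (cinner (snd p) (A *\<^sub>v snd p)) ^ n) xs)" for A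
    by (induct xs) (auto simp: algebra_simps)
  then show "\<exists>zs. (\<forall>p\<in>set zs. snd p \<in> carrier_vec m) \<and>
     (\<forall>A\<in>carrier_mat m m. k * F A = sum_list (map (\<lambda>p. fst p * (cinner (snd p) (A *\<^sub>v snd p)) ^ n) zs))"
    using a by (intro exI[of _ "map (\<lambda>p. (k * fst p, snd p)) xs"]) auto
qed

lemma power_form_span_cong: "power_form_span m n F \<Longrightarrow> (\<And>A. A \<in> carrier_mat m m \<Longrightarrow> F A = G A) \<Longrightarrow>
    power_form_span m n G"
  unfolding power_form_span_def by metis

lemma power_form_span_sum: "finite S \<Longrightarrow> (\<And>i. i \<in> S \<Longrightarrow> power_form_span m n (F i)) \<Longrightarrow>
    power_form_span m n (\<lambda>A. \<Sum>i\<in>S. F i A)"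
proof (induction S rule: finite_induct)
  case empty then show ?case using power_form_span_zero by simp
next
  case (insert x S)
  then have "power_form_span m n (\<lambda>A. F x A + (\<Sum>i\<in>S. F i A))" by (intro power_form_span_add) auto
  then show ?case using insert by simp
qed

lemma cinner_add_smult_expand:
  assumes A: "A \<in> carrier_mat m m" and \<phi>: "\<phi> \<in> carrier_vec m" and \<chi>: "\<chi> \<in> carrier_vec m"
  shows "cinner (\<phi> + z \<cdot>\<^sub>v \<chi>) (A *\<^sub>v (\<phi> + z \<cdot>\<^sub>v \<chi>)) =
    cinner \<phi> (A *\<^sub>v \<phi>) + z * cinner \<phi> (A *\<^sub>v \<chi>) + cnj z * cinner \<chi> (A *\<^sub>v \<phi>) +
        cnj z * z * cinner \<chi> (A *\<^sub>v \<chi>)"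
proof -
  have zc: "z \<cdot>\<^sub>v \<chi> \<in> carrier_vec m" using \<chi> by simp
  have Av: "A *\<^sub>v (\<phi> + z \<cdot>\<^sub>v \<chi>) = A *\<^sub>v \<phi> + z \<cdot>\<^sub>v (A *\<^sub>v \<chi>)"
    using A \<phi> \<chi> by (simp add: mult_add_distrib_mat_vec[OF A \<phi> zc] mult_mat_vec[OF A \<chi>])
  have c1: "A *\<^sub>v \<phi> \<in> carrier_vec m" "z \<cdot>\<^sub>v (A *\<^sub>v \<chi>) \<in> carrier_vec m" "A *\<^sub>v \<chi> \<in> carrier_vec m"
    using A \<phi> \<chi> by auto
  show ?thesis unfolding Av
    using \<phi> \<chi> zc c1
    by (simp add: cinner_add_left[of _ m] cinner_add_right[of _ m] cinner_smult_left[of _ m]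
        cinner_smult_right[of _ m] algebra_simps)
qed

lemma power_form_span_matrix_element:
  assumes \<phi>: "\<phi> \<in> carrier_vec m" and \<chi>: "\<chi> \<in> carrier_vec m"
  shows "power_form_span m n (\<lambda>A. (cinner \<chi> (A *\<^sub>v \<phi>)) ^ n)"
proof -
  define R where "R = 2 * n + 1"
  define z where "z j = unit_root R ^ j" for j
  define xs where "xs = map (\<lambda>j. (z j ^ n / of_nat R, \<phi> + z j \<cdot>\<^sub>v \<chi>)) [0..<R]"
  have xsc: "\<forall>p\<in>set xs. snd p \<in> carrier_vec m" unfolding xs_def using \<phi> \<chi> by auto
  have "(cinner \<chi> (A *\<^sub>v \<phi>)) ^ n = sum_list (map (\<lambda>p. fst p * (cinner (snd p) (A *\<^sub>v snd p)) ^ n) xs)"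
    if A: "A \<in> carrier_mat m m" for A
  proof -
    let ?p = "cinner \<phi> (A *\<^sub>v \<phi>) + cinner \<chi> (A *\<^sub>v \<chi>)"
    let ?b = "cinner \<phi> (A *\<^sub>v \<chi>)" and ?c = "cinner \<chi> (A *\<^sub>v \<phi>)"
    have q: "cinner (\<phi> + z j \<cdot>\<^sub>v \<chi>) (A *\<^sub>v (\<phi> + z j \<cdot>\<^sub>v \<chi>)) = ?p + z j * ?b + cnj (z j) * ?c" for j
      using cinner_add_smult_expand[OF A \<phi> \<chi>, of "z j"] cnj_unit_root_pow_mult[of R j]
        unfolding z_def by simp
    have "sum_list (map (\<lambda>p. fst p * (cinner (snd p) (A *\<^sub>v snd p)) ^ n) xs) =
        (\<Sum>j<R. z j ^ n / of_nat R * (cinner (\<phi> + z j \<cdot>\<^sub>v \<chi>) (A *\<^sub>v (\<phi> + z j \<cdot>\<^sub>v \<chi>))) ^ n)"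
      unfolding xs_def by (simp add: sum_set_upt_conv_sum_list_nat[symmetric] atLeast0LessThan comp_def)
    also have "\<dots> = (\<Sum>j<R. z j ^ n * (?p + z j * ?b + cnj (z j) * ?c) ^ n) / of_nat R"
      unfolding q by (simp add: sum_divide_distrib)
    also have "(\<Sum>j<R. z j ^ n * (?p + z j * ?b + cnj (z j) * ?c) ^ n) = of_nat R * ?c ^ n"
      unfolding z_def R_def by (rule unit_root_polarization)
    also have "of_nat R * ?c ^ n / of_nat R = ?c ^ n"
    proof -
      have Rnz: "(of_nat R :: complex) \<noteq> 0" unfolding R_def by (simp only: of_nat_eq_0_iff)
      show ?thesis by (rule nonzero_mult_div_cancel_left[OF Rnz])
    qed
    finally show ?thesis by simp
  qed
  then show ?thesis unfolding power_form_span_def using xsc by blast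
qed

lemma cinner_lincomb_left:
  assumes w: "w \<in> carrier_vec N" and x: "\<And>l. x l \<in> carrier_vec N"
    and e: "\<And>I. I < N \<Longrightarrow> w $ I = (\<Sum>l\<in>L. b l * x l $ I)"
  shows "cinner w y = (\<Sum>l\<in>L. cnj (b l) * cinner (x l) y)"
proof -
  have "cinner w y = (\<Sum>I<N. cnj (\<Sum>l\<in>L. b l * x l $ I) * y $ I)"
    using w e by (simp add: cinner_carrier[of _ N])
  also have "\<dots> = (\<Sum>l\<in>L. cnj (b l) * (\<Sum>I<N. cnj (x l $ I) * y $ I))"
    by (simp add: sum_distrib_right sum_distrib_left sum.swap[of _ L] mult.assoc)
  also have "\<dots> = (\<Sum>l\<in>L. cnj (b l) * cinner (x l) y)"
    using x by (simp add: cinner_carrier[of _ N])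
  finally show ?thesis .
qed

lemma cinner_lincomb_right:
  assumes w: "w \<in> carrier_vec N" and e: "\<And>I. I < N \<Longrightarrow> y $ I = (\<Sum>l\<in>L. a l * yy l $ I)"
  shows "cinner w y = (\<Sum>l\<in>L. a l * cinner w (yy l))"
proof -
  have "cinner w y = (\<Sum>I<N. cnj (w $ I) * (\<Sum>l\<in>L. a l * yy l $ I))"
    using w e by (simp add: cinner_carrier[of _ N])
  also have "\<dots> = (\<Sum>l\<in>L. a l * (\<Sum>I<N. cnj (w $ I) * yy l $ I))"
    by (simp add: sum_distrib_right sum_distrib_left sum.swap[of _ "{..<N}"] algebra_simps)
  also have "\<dots> = (\<Sum>l\<in>L. a l * cinner w (yy l))"
    using w by (simp add: cinner_carrier[of _ N])
  finally show ?thesis .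
qed

lemma mult_mat_vec_lincomb:
  fixes T :: "complex mat"
  assumes T: "T \<in> carrier_mat N N" and x: "\<And>l. x l \<in> carrier_vec N" and v: "v \<in> carrier_vec N"
    and e: "\<And>J. J < N \<Longrightarrow> v $ J = (\<Sum>l\<in>L. a l * x l $ J)" and I: "I < N"
  shows "(T *\<^sub>v v) $ I = (\<Sum>l\<in>L. a l * (T *\<^sub>v x l) $ I)"
proof -
  have "(T *\<^sub>v v) $ I = (\<Sum>J<N. T $$ (I,J) * (\<Sum>l\<in>L. a l * x l $ J))"
    using mult_mat_vec_sum[OF T v I] e by simp
  also have "\<dots> = (\<Sum>J<N. \<Sum>l\<in>L. T $$ (I,J) * (a l * x l $ J))"
    by (simp add: sum_distrib_left)
  also have "\<dots> = (\<Sum>J<N. \<Sum>l\<in>L. a l * (T $$ (I,J) * x l $ J))"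
    by (intro sum.cong refl) (rule mult.left_commute)
  also have "\<dots> = (\<Sum>l\<in>L. \<Sum>J<N. a l * (T $$ (I,J) * x l $ J))"
    by (rule sum.swap)
  also have "\<dots> = (\<Sum>l\<in>L. a l * (\<Sum>J<N. T $$ (I,J) * x l $ J))"
    by (simp add: sum_distrib_left)
  also have "\<dots> = (\<Sum>l\<in>L. a l * (T *\<^sub>v x l) $ I)"
    using mult_mat_vec_sum[OF T x I] by simp
  finally show ?thesis .
qed

lemma power_form_span_sym_pair:
  assumes m: "m \<ge> 1" and v: "v \<in> sym_subspace m n" and w: "w \<in> sym_subspace m n"
  shows "power_form_span m n (\<lambda>A. cinner w (tensor_pow m n A *\<^sub>v v))"
proof -
  let ?L = "{..<(n + 1) ^ m}"
  let ?t = "\<lambda>j. tensor_vec m n (probe_vec m n j)"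
  obtain a where a: "\<forall>K < m ^ n. v $ K = (\<Sum>j\<in>?L. a j * ?t j $ K)" using sym_subspace_span[OF m v] by blast
  obtain b where b: "\<forall>K < m ^ n. w $ K = (\<Sum>j\<in>?L. b j * ?t j $ K)" using sym_subspace_span[OF m w] by blast
  have vc: "v \<in> carrier_vec (m ^ n)" and wc: "w \<in> carrier_vec (m ^ n)"
    using v w unfolding sym_subspace_def by auto
  have eq: "cinner w (tensor_pow m n A *\<^sub>v v) =
     (\<Sum>j\<in>?L. a j * (\<Sum>l\<in>?L. cnj (b l) * (cinner (probe_vec m n l) (A *\<^sub>v probe_vec m n j)) ^ n))"
    if A: "A \<in> carrier_mat m m" for A
  proof -
    let ?T = "tensor_pow m n A"
    have "cinner w (?T *\<^sub>v v) = (\<Sum>j\<in>?L. a j * cinner w (?T *\<^sub>v ?t j))"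
      by (rule cinner_lincomb_right[OF wc])
          (rule mult_mat_vec_lincomb[OF tensor_pow_carrier _ vc], use a in auto)
    also have "\<dots> = (\<Sum>j\<in>?L. a j * (\<Sum>l\<in>?L. cnj (b l) * cinner (?t l) (?T *\<^sub>v ?t j)))"
      by (intro sum.cong refl arg_cong2[where f="(*)"] cinner_lincomb_left[OF wc]) (use b in auto)
    also have "\<dots> = (\<Sum>j\<in>?L. a j *
        (\<Sum>l\<in>?L. cnj (b l) * (cinner (probe_vec m n l) (A *\<^sub>v probe_vec m n j)) ^ n))"
      using cinner_tensor_pow[OF m A] by simp
    finally show ?thesis .
  qed
  have "power_form_span m n (\<lambda>A. \<Sum>j\<in>?L. a j *
      (\<Sum>l\<in>?L. cnj (b l) * (cinner (probe_vec m n l) (A *\<^sub>v probe_vec m n j)) ^ n))"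
    by (intro power_form_span_sum power_form_span_scale power_form_span_matrix_element
        probe_vec_carrier) auto
  then show ?thesis by (rule power_form_span_cong) (simp add: eq)
qed

lemma orth_proj_compl_mult_vec:
  assumes P: "is_orth_proj N K P" and P': "is_orth_proj N (orth_compl N K) P'" and v: "v \<in> carrier_vec N"
  shows "P' *\<^sub>v v = v - P *\<^sub>v v"
proof -
  define x where "x = v - P *\<^sub>v v"
  have Pv: "P *\<^sub>v v \<in> carrier_vec N" using v orth_proj_carrier[OF P] by simp
  have xc: "x \<in> carrier_vec N" unfolding x_def using v Pv by simp
  have "x \<in> orth_compl N K"
    unfolding orth_compl_def
  proof (intro CollectI conjI ballI xc)
    fix w assume w: "w \<in> K"
    have wc: "w \<in> carrier_vec N" using orth_proj_subspace_carrier[OF P w] .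
    have "cinner w x = cinner w v - cinner (P *\<^sub>v w) v"
      unfolding x_def cinner_diff_right[OF wc v Pv] orth_proj_cinner[OF P wc v] ..
    then show "cinner w x = 0" using orth_proj_fixes[OF P w] by simp
  qed
  then have x: "P' *\<^sub>v x = x" by (rule orth_proj_fixes[OF P'])
  define z where "z = P' *\<^sub>v (P *\<^sub>v v)"
  have zc: "z \<in> carrier_vec N" unfolding z_def using Pv orth_proj_carrier[OF P'] by simp
  have "cinner z z = cinner (P' *\<^sub>v z) (P *\<^sub>v v)"
    by (subst (2) z_def) (rule orth_proj_cinner[OF P' zc Pv])
  also have "\<dots> = 0"
    using orth_proj_range[OF P' zc] orth_proj_range[OF P v] Pv orth_proj_carrier[OF P'] zc
      cinner_cnj[of "P' *\<^sub>v z" N "P *\<^sub>v v"] unfolding orth_compl_def by auto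
  finally have z: "P' *\<^sub>v (P *\<^sub>v v) = 0\<^sub>v N" using cinner_self_eq_0[OF zc] unfolding z_def by simp
  have "v = x + P *\<^sub>v v" unfolding x_def using v Pv orth_proj_carrier[OF P] by (intro eq_vecI) auto
  then have "P' *\<^sub>v v = P' *\<^sub>v x + P' *\<^sub>v (P *\<^sub>v v)"
    using mult_add_distrib_mat_vec[OF orth_proj_carrier[OF P'] xc Pv] by metis
  then show ?thesis using x z xc unfolding x_def by simp
qed

lemma orth_proj_compl_add:
  assumes P: "is_orth_proj N K P" and P': "is_orth_proj N (orth_compl N K) P'"
  shows "P + P' = 1\<^sub>m N"
proof (rule mat_eq_by_mult_vec[of _ N])
  fix v :: "complex vec" assume v: "v \<in> carrier_vec N"
  have Pv: "P *\<^sub>v v \<in> carrier_vec N" using v orth_proj_carrier[OF P] by simp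
  have "(P + P') *\<^sub>v v = P *\<^sub>v v + P' *\<^sub>v v"
    by (rule add_mult_distrib_mat_vec[OF orth_proj_carrier[OF P] orth_proj_carrier[OF P'] v])
  also have "\<dots> = v" unfolding orth_proj_compl_mult_vec[OF P P' v] using v Pv orth_proj_carrier[OF P]
    by (intro eq_vecI) auto
  finally show "(P + P') *\<^sub>v v = 1\<^sub>m N *\<^sub>v v" using v by simp
qed (use orth_proj_carrier[OF P] orth_proj_carrier[OF P'] in auto)

locale sym_asym_projectors =
  fixes m n :: nat and Pi_p Pi_m :: "complex mat"
  assumes m: "m \<ge> 1"
    and Pi_p: "is_orth_proj (m ^ n) (sym_subspace m n) Pi_p"
    and Pi_m: "is_orth_proj (m ^ n) (asym_subspace m n) Pi_m"
begin

lemma Pi_p_carrier[simp]: "Pi_p \<in> carrier_mat (m ^ n) (m ^ n)"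
  using orth_proj_carrier[OF Pi_p] .

lemma Pi_m_carrier[simp]: "Pi_m \<in> carrier_mat (m ^ n) (m ^ n)"
  using orth_proj_carrier[OF Pi_m] .

lemma Pi_p_add_Pi_m: "Pi_p + Pi_m = 1\<^sub>m (m ^ n)"
  using orth_proj_compl_add[OF Pi_p Pi_m[unfolded asym_subspace_def]] .

lemma povm2_Pi: "povm2 (m ^ n) Pi_p Pi_m"
  using orth_proj_positive[OF Pi_p] orth_proj_positive[OF Pi_m] Pi_p_add_Pi_m
  unfolding povm2_def by auto

lemma mtrace_tensor_pow_split:
  assumes \<rho>: "\<rho> \<in> density_ops m" and Q: "Q \<in> carrier_mat (m ^ n) (m ^ n)"
  shows "mtrace (tensor_pow m n \<rho> * Q) =
    mtrace (tensor_pow m n \<rho> * (Pi_p * Q * Pi_p)) + mtrace (tensor_pow m n \<rho> * (Pi_m * Q * Pi_m))"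
  by (rule mtrace_block_diagonal[OF Pi_p Pi_m Pi_p_add_Pi_m _ tensor_pow_carrier
        adj_tensor_pow[OF m density_ops_hermitian[OF \<rho>]] tensor_pow_sym_subspace[OF m] Q])
    (auto simp: asym_subspace_def orth_compl_def)

lemma mtrace_tensor_pow_sandwich_le:
  assumes \<rho>: "\<rho> \<in> density_ops m" and Q: "positive_op (m ^ n) Q"
  shows "Re (mtrace (tensor_pow m n \<rho> * (Pi_p * Q * Pi_p))) \<le> Re (mtrace (tensor_pow m n \<rho> * Q))"
proof -
  have "positive_op (m ^ n) (Pi_m * Q * Pi_m)"
    by (rule positive_op_sandwich[OF Q Pi_m_carrier orth_proj_adj[OF Pi_m]])
  then have "Re (mtrace (tensor_pow m n \<rho> * (Pi_m * Q * Pi_m))) \<ge> 0"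
    using \<rho> m unfolding density_ops_def by (intro mtrace_tensor_pow_nonneg) auto
  moreover have "Q \<in> carrier_mat (m ^ n) (m ^ n)" using Q unfolding positive_op_def by auto
  ultimately show ?thesis using mtrace_tensor_pow_split[OF \<rho>] by simp
qed

lemma rank_one_tensor_pow:
  assumes "rank_one m \<rho>"
  obtains \<psi> where "\<psi> \<in> carrier_vec m" "tensor_pow m n \<rho> = outer_prod (tensor_vec m n \<psi>) (tensor_vec m n \<psi>)"
proof -
  obtain \<psi> where \<psi>: "\<psi> \<in> carrier_vec m" "\<rho> = Matrix.mat m m (\<lambda>(i,j). \<psi> $ i * cnj (\<psi> $ j))"
    using assms unfolding rank_one_def by auto
  then have "\<rho> = outer_prod \<psi> \<psi>" unfolding outer_prod_def by auto
  then show ?thesis using that \<psi>(1) tensor_pow_outer_prod[OF m \<psi>(1)] by auto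
qed

text \<open>Pure product states lie in the symmetric subspace, where $\Pi_m$ vanishes.\<close>

lemma mtrace_rank_one_Pi_m:
  assumes \<rho>: "rank_one m \<rho>" and Q: "Q \<in> carrier_mat (m ^ n) (m ^ n)"
  shows "mtrace (tensor_pow m n \<rho> * (Pi_m * Q * Pi_m)) = 0" and "mtrace (tensor_pow m n \<rho> * Pi_m) = 0"
proof -
  obtain \<psi> where T: "tensor_pow m n \<rho> = outer_prod (tensor_vec m n \<psi>) (tensor_vec m n \<psi>)"
    using rank_one_tensor_pow[OF \<rho>] by blast
  let ?t = "tensor_vec m n \<psi>"
  have "Pi_m *\<^sub>v ?t = ?t - Pi_p *\<^sub>v ?t"
    by (rule orth_proj_compl_mult_vec[OF Pi_p Pi_m[unfolded asym_subspace_def] tensor_vec_carrier])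
  then have z: "Pi_m *\<^sub>v ?t = 0\<^sub>v (m ^ n)"
    using orth_proj_fixes[OF Pi_p tensor_vec_sym_subspace[OF m]] by simp
  have "mtrace (tensor_pow m n \<rho> * (Pi_m * Q * Pi_m)) = cinner ?t ((Pi_m * Q * Pi_m) *\<^sub>v ?t)"
    unfolding T using mult_carrier_mat[OF mult_carrier_mat[OF Pi_m_carrier Q] Pi_m_carrier]
    by (intro mtrace_mult_outer_prod(2)) auto
  also have "\<dots> = cinner (Pi_m *\<^sub>v ?t) (Q *\<^sub>v (Pi_m *\<^sub>v ?t))"
    by (rule cinner_sandwich[OF Pi_m_carrier orth_proj_adj[OF Pi_m] Q tensor_vec_carrier])
  finally show "mtrace (tensor_pow m n \<rho> * (Pi_m * Q * Pi_m)) = 0"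
    unfolding z using Q by (simp add: cinner_carrier[of _ "m ^ n"])
  have "mtrace (tensor_pow m n \<rho> * Pi_m) = cinner ?t (Pi_m *\<^sub>v ?t)"
    unfolding T by (intro mtrace_mult_outer_prod(2)[where N="m ^ n"]) auto
  then show "mtrace (tensor_pow m n \<rho> * Pi_m) = 0" unfolding z by (simp add: cinner_zero_right)
qed

text \<open>$A \mapsto \mathrm{Tr}(A^{\otimes n}\,\Pi_p Q \Pi_p)$ only involves matrix elements of
  $A^{\otimes n}$ between symmetric vectors.\<close>

lemma power_form_span_mtrace_sandwich:
  assumes Q: "Q \<in> carrier_mat (m ^ n) (m ^ n)"
  shows "power_form_span m n (\<lambda>A. mtrace (tensor_pow m n A * (Pi_p * Q * Pi_p)))"
proof -
  have "power_form_span m n (\<lambda>A. \<Sum>c<m ^ n. \<Sum>d<m ^ n. Q $$ (c,d) *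
      cinner (Pi_p *\<^sub>v unit_vec (m ^ n) d) (tensor_pow m n A *\<^sub>v (Pi_p *\<^sub>v unit_vec (m ^ n) c)))"
    by (intro power_form_span_sum power_form_span_scale power_form_span_sym_pair[OF m]
        orth_proj_range[OF Pi_p]) auto
  then show ?thesis
    by (rule power_form_span_cong)
      (simp add: mtrace_sandwich_expand[OF tensor_pow_carrier Pi_p_carrier Q Pi_p_carrier
          orth_proj_adj[OF Pi_p]])
qed

end

section \<open>Integrals against a unitarily invariant prior\<close>

lemma Re_mult_real_power:
  assumes "Im z = 0"
  shows "Re (a * z ^ n) = Re a * Re z ^ n"
proof -
  have "z = complex_of_real (Re z)" using assms by (simp add: complex_eq_iff)
  then have "z ^ n = complex_of_real (Re z ^ n)" by (metis of_real_power)
  then show ?thesis by simp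
qed

lemma cinner_unitary_conj:
  assumes U: "U \<in> carrier_mat m m" and \<rho>: "\<rho> \<in> carrier_mat m m" and u: "u \<in> carrier_vec m"
  shows "cinner u ((U * \<rho> * adj U) *\<^sub>v u) = cinner (adj U *\<^sub>v u) (\<rho> *\<^sub>v (adj U *\<^sub>v u))"
proof -
  have aU: "adj U *\<^sub>v u \<in> carrier_vec m" using mult_mat_vec_carrier[OF adj_carrier[OF U] u] .
  have "(U * \<rho> * adj U) *\<^sub>v u = (U * \<rho>) *\<^sub>v (adj U *\<^sub>v u)"
    using U \<rho> u by (simp add: assoc_mult_mat_vec[of _ m m _ m])
  also have "\<dots> = U *\<^sub>v (\<rho> *\<^sub>v (adj U *\<^sub>v u))" by (rule assoc_mult_mat_vec[OF U \<rho> aU])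
  finally have "(U * \<rho> * adj U) *\<^sub>v u = U *\<^sub>v (\<rho> *\<^sub>v (adj U *\<^sub>v u))" .
  then show ?thesis using cinner_adj[OF U u mult_mat_vec_carrier[OF \<rho> aU]] by simp
qed

lemma pure_fraction_le:
  fixes p q t b :: real
  assumes p: "p \<ge> 0" and q: "q \<ge> 0" and t: "t \<ge> 0" and b: "q * t \<le> b"
    and nz: "p * t + b \<noteq> 0" "p + q \<noteq> 0"
  shows "p * t / (p * t + b) \<le> p / (p + q)"
proof -
  have "p * t + b > 0" using nz p q t b by (smt (verit) mult_nonneg_nonneg)
  moreover have "p + q > 0" using nz p q by simp
  moreover have "p * t * (p + q) \<le> p * (p * t + b)"
    using mult_left_mono[OF b p] by (simp add: algebra_simps)
  ultimately show ?thesis by (simp add: divide_le_eq le_divide_eq mult.commute)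
qed

locale purity_discrimination = sym_asym_projectors m n Pi_p Pi_m for m n Pi_p Pi_m +
  fixes M :: "complex mat measure" and \<eta> \<mu> :: "complex mat \<Rightarrow> real"
  assumes space: "space M = density_ops m"
    and M_inv: "\<And>U. unitary_mat m U \<Longrightarrow>
                  (\<lambda>\<rho>. U * \<rho> * adj U) \<in> M \<rightarrow>\<^sub>M M \<and> distr M M (\<lambda>\<rho>. U * \<rho> * adj U) = M"
    and mu_inv: "\<And>U \<rho>. unitary_mat m U \<Longrightarrow> \<rho> \<in> density_ops m \<Longrightarrow> \<mu> (U * \<rho> * adj U) = \<mu> \<rho>"
    and mu_pure: "\<And>\<rho>. \<rho> \<in> density_ops m \<Longrightarrow> \<mu> \<rho> = 1 \<longleftrightarrow> rank_one m \<rho>"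
    and mu_range: "\<And>\<rho>. \<rho> \<in> density_ops m \<Longrightarrow> 0 \<le> \<mu> \<rho> \<and> \<mu> \<rho> \<le> 1"
    and mu_meas: "\<mu> \<in> borel_measurable M"
    and eta_nonneg: "\<And>\<rho>. \<rho> \<in> density_ops m \<Longrightarrow> \<eta> \<rho> \<ge> 0"
    and eta_inv: "\<And>U \<rho>. unitary_mat m U \<Longrightarrow> \<rho> \<in> density_ops m \<Longrightarrow> \<eta> (U * \<rho> * adj U) = \<eta> \<rho>"
    and integrable: "\<And>A. A \<in> carrier_mat (m ^ n) (m ^ n) \<Longrightarrow>
                  integrable M (\<lambda>\<rho>. \<eta> \<rho> * Re (mtrace (tensor_pow m n \<rho> * A)))"
begin

definition invariant_event :: "complex mat set \<Rightarrow> bool" where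
  "invariant_event S \<longleftrightarrow> {\<rho> \<in> space M. \<rho> \<in> S} \<in> sets M \<and>
     (\<forall>U \<rho>. unitary_mat m U \<longrightarrow> \<rho> \<in> space M \<longrightarrow> (U * \<rho> * adj U \<in> S \<longleftrightarrow> \<rho> \<in> S))"

lemma invariant_event_purity: "Measurable.pred borel P \<Longrightarrow> invariant_event {\<rho>. P (\<mu> \<rho>)}"
proof -
  assume [measurable]: "Measurable.pred borel P"
  have [measurable]: "\<mu> \<in> borel_measurable M" by (rule mu_meas)
  have "{\<rho> \<in> space M. \<rho> \<in> {\<rho>. P (\<mu> \<rho>)}} \<in> sets M" by simp measurable
  then show ?thesis unfolding invariant_event_def using mu_inv space by auto
qed

lemma invariant_events:
  "invariant_event {\<rho>. \<mu> \<rho> = 1}" "invariant_event {\<rho>. \<mu> \<rho> < 1}" "invariant_event {\<rho>. \<mu> \<rho> \<le> 1}"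
  by (rule invariant_event_purity; measurable)+

lemma integrable_wint:
  assumes S: "invariant_event S" and X: "X \<in> carrier_mat (m ^ n) (m ^ n)"
  shows "integrable M (\<lambda>\<rho>. indicator S \<rho> * (\<eta> \<rho> * Re (mtrace (tensor_pow m n \<rho> * X))))"
proof -
  have "integrable M (\<lambda>\<rho>. indicator {\<rho> \<in> space M. \<rho> \<in> S} \<rho> *\<^sub>R (\<eta> \<rho> * Re (mtrace (tensor_pow m n \<rho> * X))))"
    using S integrable[OF X] unfolding invariant_event_def by (intro integrable_mult_indicator) auto
  moreover have "integrable M (\<lambda>\<rho>. indicator {\<rho> \<in> space M. \<rho> \<in> S} \<rho> *\<^sub>R
      (\<eta> \<rho> * Re (mtrace (tensor_pow m n \<rho> * X)))) \<longleftrightarrow>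
      integrable M (\<lambda>\<rho>. indicator S \<rho> * (\<eta> \<rho> * Re (mtrace (tensor_pow m n \<rho> * X))))"
    by (rule Bochner_Integration.integrable_cong) (auto simp: indicator_def)
  ultimately show ?thesis by simp
qed

lemma wint_nonneg:
  assumes Q: "positive_op (m ^ n) Q"
  shows "wint M \<eta> m n S Q \<ge> 0"
  unfolding wint_def
proof (rule Bochner_Integration.integral_nonneg)
  fix \<rho> assume "\<rho> \<in> space M"
  then have \<rho>: "\<rho> \<in> density_ops m" using space by simp
  then have "Re (mtrace (tensor_pow m n \<rho> * Q)) \<ge> 0"
    using m Q unfolding density_ops_def by (intro mtrace_tensor_pow_nonneg) auto
  then show "0 \<le> indicator S \<rho> * (\<eta> \<rho> * Re (mtrace (tensor_pow m n \<rho> * Q)))"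
    using eta_nonneg[OF \<rho>] by simp
qed

lemma wint_purity_split:
  assumes X: "X \<in> carrier_mat (m ^ n) (m ^ n)"
  shows "wint M \<eta> m n {\<rho>. \<mu> \<rho> \<le> 1} X = wint M \<eta> m n {\<rho>. \<mu> \<rho> = 1} X + wint M \<eta> m n {\<rho>. \<mu> \<rho> < 1} X"
proof -
  let ?f = "\<lambda>\<rho>. \<eta> \<rho> * Re (mtrace (tensor_pow m n \<rho> * X))"
  have "wint M \<eta> m n {\<rho>. \<mu> \<rho> \<le> 1} X =
      (\<integral>\<rho>. indicator {\<rho>. \<mu> \<rho> = 1} \<rho> * ?f \<rho> + indicator {\<rho>. \<mu> \<rho> < 1} \<rho> * ?f \<rho> \<partial>M)"
    unfolding wint_def
  proof (intro Bochner_Integration.integral_cong refl)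
    fix \<rho> assume "\<rho> \<in> space M"
    then have "\<mu> \<rho> \<le> 1" using mu_range space by simp
    then show "indicator {\<rho>. \<mu> \<rho> \<le> 1} \<rho> * ?f \<rho> =
        indicator {\<rho>. \<mu> \<rho> = 1} \<rho> * ?f \<rho> + indicator {\<rho>. \<mu> \<rho> < 1} \<rho> * ?f \<rho>"
      by (auto simp: indicator_def)
  qed
  also have "\<dots> = wint M \<eta> m n {\<rho>. \<mu> \<rho> = 1} X + wint M \<eta> m n {\<rho>. \<mu> \<rho> < 1} X"
    unfolding wint_def
    by (rule Bochner_Integration.integral_add[OF integrable_wint[OF invariant_events(1) X]
          integrable_wint[OF invariant_events(2) X]])
  finally show ?thesis .
qed

lemma wint_pure_sandwich:
  assumes Q: "Q \<in> carrier_mat (m ^ n) (m ^ n)"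
  shows "wint M \<eta> m n {\<rho>. \<mu> \<rho> = 1} Q = wint M \<eta> m n {\<rho>. \<mu> \<rho> = 1} (Pi_p * Q * Pi_p)"
  unfolding wint_def
proof (intro Bochner_Integration.integral_cong refl)
  fix \<rho> assume "\<rho> \<in> space M"
  then have \<rho>: "\<rho> \<in> density_ops m" using space by simp
  show "indicator {\<rho>. \<mu> \<rho> = 1} \<rho> * (\<eta> \<rho> * Re (mtrace (tensor_pow m n \<rho> * Q))) =
        indicator {\<rho>. \<mu> \<rho> = 1} \<rho> * (\<eta> \<rho> * Re (mtrace (tensor_pow m n \<rho> * (Pi_p * Q * Pi_p))))"
    using mtrace_tensor_pow_split[OF \<rho> Q] mtrace_rank_one_Pi_m(1)[OF _ Q] mu_pure[OF \<rho>]
    by (cases "\<mu> \<rho> = 1") auto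
qed

lemma wint_pure_Pi_m: "wint M \<eta> m n {\<rho>. \<mu> \<rho> = 1} Pi_m = 0"
proof -
  have "wint M \<eta> m n {\<rho>. \<mu> \<rho> = 1} Pi_m = (\<integral>\<rho>. 0 \<partial>M)"
    unfolding wint_def
    using mtrace_rank_one_Pi_m(2)[OF _ Pi_m_carrier] mu_pure space
    by (intro Bochner_Integration.integral_cong refl) (auto simp: indicator_def)
  then show ?thesis by simp
qed

lemma wint_mixed_sandwich_le:
  assumes Q: "positive_op (m ^ n) Q"
  shows "wint M \<eta> m n {\<rho>. \<mu> \<rho> < 1} (Pi_p * Q * Pi_p) \<le> wint M \<eta> m n {\<rho>. \<mu> \<rho> < 1} Q"
proof -
  have Qc: "Q \<in> carrier_mat (m ^ n) (m ^ n)" using Q unfolding positive_op_def by auto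
  have PQP: "Pi_p * Q * Pi_p \<in> carrier_mat (m ^ n) (m ^ n)"
    using mult_carrier_mat[OF mult_carrier_mat[OF Pi_p_carrier Qc] Pi_p_carrier] .
  show ?thesis unfolding wint_def
  proof (rule Bochner_Integration.integral_mono[OF integrable_wint[OF invariant_events(2) PQP]
        integrable_wint[OF invariant_events(2) Qc]])
    fix \<rho> assume "\<rho> \<in> space M"
    then have \<rho>: "\<rho> \<in> density_ops m" using space by simp
    show "indicator {\<rho>. \<mu> \<rho> < 1} \<rho> * (\<eta> \<rho> * Re (mtrace (tensor_pow m n \<rho> * (Pi_p * Q * Pi_p))))
        \<le> indicator {\<rho>. \<mu> \<rho> < 1} \<rho> * (\<eta> \<rho> * Re (mtrace (tensor_pow m n \<rho> * Q)))"
      using mtrace_tensor_pow_sandwich_le[OF \<rho> Q] eta_nonneg[OF \<rho>]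
      by (intro mult_left_mono) (auto simp: indicator_def)
  qed
qed

definition moment :: "complex mat set \<Rightarrow> complex vec \<Rightarrow> real" where
  "moment S u = (\<integral>\<rho>. indicator S \<rho> * (\<eta> \<rho> * Re ((cinner u (\<rho> *\<^sub>v u)) ^ n)) \<partial>M)"

lemma integrable_moment:
  assumes S: "invariant_event S" and u: "u \<in> carrier_vec m"
  shows "integrable M (\<lambda>\<rho>. indicator S \<rho> * (\<eta> \<rho> * Re ((cinner u (\<rho> *\<^sub>v u)) ^ n)))"
proof -
  have "mtrace (tensor_pow m n \<rho> * outer_prod (tensor_vec m n u) (tensor_vec m n u)) =
      (cinner u (\<rho> *\<^sub>v u)) ^ n"
    if \<rho>: "\<rho> \<in> space M" for \<rho>
    using mtrace_mult_outer_prod(1)[OF tensor_pow_carrier tensor_vec_carrier tensor_vec_carrier]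
      cinner_tensor_pow[OF m _ u u] \<rho> space density_ops_carrier by simp
  then have "integrable M (\<lambda>\<rho>. indicator S \<rho> *
      (\<eta> \<rho> * Re (mtrace (tensor_pow m n \<rho> * outer_prod (tensor_vec m n u) (tensor_vec m n u))))) \<longleftrightarrow>
    integrable M (\<lambda>\<rho>. indicator S \<rho> * (\<eta> \<rho> * Re ((cinner u (\<rho> *\<^sub>v u)) ^ n)))"
    by (intro Bochner_Integration.integrable_cong) auto
  then show ?thesis
    using integrable_wint[OF S outer_prod_carrier[OF tensor_vec_carrier tensor_vec_carrier]] by simp
qed

lemma moment_unitary:
  assumes S: "invariant_event S" and u: "u \<in> carrier_vec m" and U: "unitary_mat m U"
  shows "moment S u = moment S (adj U *\<^sub>v u)"
proof -
  let ?T = "\<lambda>\<rho>. U * \<rho> * adj U"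
  let ?f = "\<lambda>\<rho>. indicator S \<rho> * (\<eta> \<rho> * Re ((cinner u (\<rho> *\<^sub>v u)) ^ n))"
  have Uc: "U \<in> carrier_mat m m" using U unfolding unitary_mat_def by auto
  have meas: "?T \<in> M \<rightarrow>\<^sub>M M" and distr: "distr M M ?T = M" using M_inv[OF U] by auto
  have "moment S u = integral\<^sup>L (distr M M ?T) ?f" unfolding moment_def distr ..
  also have "\<dots> = (\<integral>\<rho>. ?f (?T \<rho>) \<partial>M)"
    by (rule integral_distr[OF meas borel_measurable_integrable[OF integrable_moment[OF S u]]])
  also have "\<dots> = moment S (adj U *\<^sub>v u)"
    unfolding moment_def
  proof (intro Bochner_Integration.integral_cong refl)
    fix \<rho> assume \<rho>: "\<rho> \<in> space M"
    then have \<rho>d: "\<rho> \<in> density_ops m" using space by simp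
    have "indicator S (?T \<rho>) = (indicator S \<rho> :: real)"
      using S \<rho> U unfolding invariant_event_def by (auto simp: indicator_def)
    then show "?f (?T \<rho>) = indicator S \<rho> * (\<eta> \<rho> * Re ((cinner (adj U *\<^sub>v u) (\<rho> *\<^sub>v (adj U *\<^sub>v u))) ^ n))"
      by (simp add: eta_inv[OF U \<rho>d] cinner_unitary_conj[OF Uc density_ops_carrier[OF \<rho>d] u])
  qed
  finally show ?thesis .
qed

lemma moment_smult:
  "moment S (c \<cdot>\<^sub>v unit_vec m 0) = (Re (cnj c * c)) ^ n * moment S (unit_vec m 0)"
proof -
  let ?e = "unit_vec m 0 :: complex vec"
  have "Re ((cinner (c \<cdot>\<^sub>v ?e) (\<rho> *\<^sub>v (c \<cdot>\<^sub>v ?e))) ^ n) =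
      (Re (cnj c * c)) ^ n * Re ((cinner ?e (\<rho> *\<^sub>v ?e)) ^ n)"
    if \<rho>: "\<rho> \<in> density_ops m" for \<rho>
  proof -
    have \<rho>c: "\<rho> \<in> carrier_mat m m" using density_ops_carrier[OF \<rho>] .
    have "cinner (c \<cdot>\<^sub>v ?e) (\<rho> *\<^sub>v (c \<cdot>\<^sub>v ?e)) = cnj c * c * cinner ?e (\<rho> *\<^sub>v ?e)"
      using \<rho>c by (simp add: mult_mat_vec[OF \<rho>c] cinner_smult_left[of _ m] cinner_smult_right[of _ m])
    moreover have "cnj c * c = complex_of_real (Re (cnj c * c))" by (simp add: complex_eq_iff)
    ultimately have "cinner (c \<cdot>\<^sub>v ?e) (\<rho> *\<^sub>v (c \<cdot>\<^sub>v ?e)) =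
        complex_of_real (Re (cnj c * c)) * cinner ?e (\<rho> *\<^sub>v ?e)" by simp
    then show ?thesis by (simp add: power_mult_distrib flip: of_real_power)
  qed
  then have "moment S (c \<cdot>\<^sub>v ?e) =
      (\<integral>\<rho>. (Re (cnj c * c)) ^ n * (indicator S \<rho> * (\<eta> \<rho> * Re ((cinner ?e (\<rho> *\<^sub>v ?e)) ^ n))) \<partial>M)"
    unfolding moment_def using space by (intro Bochner_Integration.integral_cong refl) (auto simp: ac_simps)
  then show ?thesis unfolding moment_def by simp
qed

lemma moment_eq_norm_power:
  assumes S: "invariant_event S" and u: "u \<in> carrier_vec m"
  shows "moment S u = (Re (cinner u u)) ^ n * moment S (unit_vec m 0)"
proof -
  obtain U c where U: "unitary_mat m U" and Uu: "adj U *\<^sub>v u = c \<cdot>\<^sub>v unit_vec m 0"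
    and c: "cnj c * c = cinner u u"
    using unitary_to_unit_vec[OF m u] by blast
  have "moment S u = moment S (c \<cdot>\<^sub>v unit_vec m 0)" using moment_unitary[OF S u U] Uu by simp
  then show ?thesis unfolding moment_smult c .
qed

lemma moment_nonneg: "moment S (unit_vec m 0) \<ge> 0"
  unfolding moment_def
proof (rule Bochner_Integration.integral_nonneg)
  fix \<rho> assume "\<rho> \<in> space M"
  then have \<rho>: "\<rho> \<in> density_ops m" using space by simp
  have "Im (cinner (unit_vec m 0) (\<rho> *\<^sub>v unit_vec m 0)) = 0 \<and>
      Re (cinner (unit_vec m 0) (\<rho> *\<^sub>v unit_vec m 0)) \<ge> 0"
    using \<rho> unit_vec_carrier unfolding density_ops_def positive_op_def by blast
  then have "Re ((cinner (unit_vec m 0) (\<rho> *\<^sub>v unit_vec m 0)) ^ n) \<ge> 0"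
    using Re_mult_real_power[of _ 1 n] by simp
  then show "0 \<le> indicator S \<rho> * (\<eta> \<rho> * Re ((cinner (unit_vec m 0) (\<rho> *\<^sub>v unit_vec m 0)) ^ n))"
    using eta_nonneg[OF \<rho>] by simp
qed

text \<open>Integrating a linear combination of the forms $A \mapsto \langle u, A u\rangle^n$ against the
  invariant prior gives the moment of $e_0$ times the value of the combination at $A = 1$.\<close>

lemma wint_power_form:
  assumes S: "invariant_event S" and X: "X \<in> carrier_mat (m ^ n) (m ^ n)"
    and F: "power_form_span m n (\<lambda>A. mtrace (tensor_pow m n A * X))"
  shows "wint M \<eta> m n S X = moment S (unit_vec m 0) * Re (mtrace X)"
proof -
  obtain xs where xsc: "\<forall>p\<in>set xs. snd p \<in> carrier_vec m"
    and xe: "\<forall>A\<in>carrier_mat m m. mtrace (tensor_pow m n A * X) =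
      sum_list (map (\<lambda>p. fst p * (cinner (snd p) (A *\<^sub>v snd p)) ^ n) xs)"
    using F unfolding power_form_span_def by blast
  define K where "K = length xs"
  define c where "c i = fst (xs ! i)" for i
  define u where "u i = snd (xs ! i)" for i
  have u: "u i \<in> carrier_vec m" if "i < K" for i using xsc that unfolding u_def K_def by auto
  have tr: "mtrace (tensor_pow m n A * X) = (\<Sum>i<K. c i * (cinner (u i) (A *\<^sub>v u i)) ^ n)"
    if "A \<in> carrier_mat m m" for A
    using xe that unfolding K_def c_def u_def by (simp add: sum_list_sum_nth atLeast0LessThan)
  have "Re (mtrace (tensor_pow m n \<rho> * X)) = (\<Sum>i<K. Re (c i) * Re ((cinner (u i) (\<rho> *\<^sub>v u i)) ^ n))"
    if \<rho>: "\<rho> \<in> density_ops m" for \<rho>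
  proof -
    have "Im (cinner (u i) (\<rho> *\<^sub>v u i)) = 0" if "i < K" for i
      using \<rho> u[OF that] unfolding density_ops_def positive_op_def by auto
    then show ?thesis
      unfolding tr[OF density_ops_carrier[OF \<rho>]] Re_sum using Re_mult_real_power by simp
  qed
  then have "wint M \<eta> m n S X =
      (\<integral>\<rho>. (\<Sum>i<K. Re (c i) * (indicator S \<rho> * (\<eta> \<rho> * Re ((cinner (u i) (\<rho> *\<^sub>v u i)) ^ n)))) \<partial>M)"
    unfolding wint_def using space
    by (intro Bochner_Integration.integral_cong refl)
        (simp add: sum_distrib_left sum_distrib_right ac_simps)
  also have "\<dots> = (\<Sum>i<K. Re (c i) * moment S (u i))"
    unfolding moment_def using integrable_moment[OF S u] by simp
  also have "\<dots> = moment S (unit_vec m 0) * (\<Sum>i<K. Re (c i) * Re (cinner (u i) (u i)) ^ n)"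
    using moment_eq_norm_power[OF S u] by (simp add: sum_distrib_left ac_simps)
  also have "(\<Sum>i<K. Re (c i) * Re (cinner (u i) (u i)) ^ n) = Re (mtrace X)"
    using tr[of "1\<^sub>m m"] X u cinner_self_nonneg[OF u] Re_mult_real_power
    by (simp add: tensor_pow_one[OF m] Re_sum)
  finally show ?thesis .
qed

lemma wint_sandwich:
  assumes S: "invariant_event S" and Q: "Q \<in> carrier_mat (m ^ n) (m ^ n)"
  shows "wint M \<eta> m n S (Pi_p * Q * Pi_p) = moment S (unit_vec m 0) * Re (mtrace (Pi_p * Q * Pi_p))"
  by (rule wint_power_form[OF S mult_carrier_mat[OF mult_carrier_mat[OF Pi_p_carrier Q] Pi_p_carrier]
        power_form_span_mtrace_sandwich[OF Q]])

lemma p_pure_p_le: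
  assumes Q: "positive_op (m ^ n) Q"
    and nz: "wint M \<eta> m n {\<rho>. \<mu> \<rho> \<le> 1} Q \<noteq> 0" "wint M \<eta> m n {\<rho>. \<mu> \<rho> \<le> 1} Pi_p \<noteq> 0"
  shows "p_pure_p M \<eta> \<mu> m n Q \<le> p_pure_p M \<eta> \<mu> m n Pi_p"
proof -
  have Qc: "Q \<in> carrier_mat (m ^ n) (m ^ n)" using Q unfolding positive_op_def by auto
  define p where "p = moment {\<rho>. \<mu> \<rho> = 1} (unit_vec m 0)"
  define q where "q = moment {\<rho>. \<mu> \<rho> < 1} (unit_vec m 0)"
  define t where "t = Re (mtrace (Pi_p * Q * Pi_p))"
  define d where "d = Re (mtrace Pi_p)"
  have PP: "Pi_p * Pi_p * Pi_p = Pi_p" using Pi_p unfolding is_orth_proj_def by auto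
  have t: "t \<ge> 0" unfolding t_def
    by (rule mtrace_positive_nonneg[OF positive_op_sandwich[OF Q Pi_p_carrier orth_proj_adj[OF Pi_p]]])
  have pure_Q: "wint M \<eta> m n {\<rho>. \<mu> \<rho> = 1} Q = p * t"
    using wint_pure_sandwich[OF Qc] wint_sandwich[OF invariant_events(1) Qc] unfolding p_def t_def by simp
  have mixed_Q: "wint M \<eta> m n {\<rho>. \<mu> \<rho> < 1} Q \<ge> q * t"
    using wint_mixed_sandwich_le[OF Q] wint_sandwich[OF invariant_events(2) Qc]
      unfolding q_def t_def by simp
  have pure_Pi: "wint M \<eta> m n {\<rho>. \<mu> \<rho> = 1} Pi_p = p * d"
    using wint_pure_sandwich[OF Pi_p_carrier] wint_sandwich[OF invariant_events(1) Pi_p_carrier] PP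
    unfolding p_def d_def by simp
  have mixed_Pi: "wint M \<eta> m n {\<rho>. \<mu> \<rho> < 1} Pi_p = q * d"
    using wint_sandwich[OF invariant_events(2) Pi_p_carrier] PP unfolding q_def d_def by simp
  have "d \<noteq> 0" using nz(2) wint_purity_split[OF Pi_p_carrier] pure_Pi mixed_Pi by auto
  then have "p * d / (p * d + q * d) = p / (p + q)" by (simp add: distrib_right[symmetric])
  moreover have "p * t / (p * t + wint M \<eta> m n {\<rho>. \<mu> \<rho> < 1} Q) \<le> p / (p + q)"
    using nz wint_purity_split[OF Qc] wint_purity_split[OF Pi_p_carrier] pure_Q pure_Pi mixed_Pi
    by (intro pure_fraction_le[OF _ _ t mixed_Q])
      (auto simp: p_def q_def moment_nonneg distrib_right[symmetric])
  ultimately show ?thesis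
    unfolding p_pure_p_def wint_purity_split[OF Qc] wint_purity_split[OF Pi_p_carrier]
      pure_Q pure_Pi mixed_Pi by simp
qed

lemma p_mixed_m_le:
  assumes Q: "positive_op (m ^ n) Q"
    and nz: "wint M \<eta> m n {\<rho>. \<mu> \<rho> \<le> 1} Pi_m \<noteq> 0"
  shows "p_mixed_m M \<eta> \<mu> m n Q \<le> p_mixed_m M \<eta> \<mu> m n Pi_m"
proof -
  have Qc: "Q \<in> carrier_mat (m ^ n) (m ^ n)" using Q unfolding positive_op_def by auto
  have "p_mixed_m M \<eta> \<mu> m n Pi_m = 1"
    using nz wint_purity_split[OF Pi_m_carrier] wint_pure_Pi_m unfolding p_mixed_m_def by simp
  moreover
  obtain all mixed where all: "wint M \<eta> m n {\<rho>. \<mu> \<rho> \<le> 1} Q = all"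
    and mixed: "wint M \<eta> m n {\<rho>. \<mu> \<rho> < 1} Q = mixed" by blast
  then have "mixed \<le> all" "0 \<le> mixed"
    using wint_purity_split[OF Qc] wint_nonneg[OF Q] by (metis le_add_same_cancel2)+
  then have "mixed / all \<le> 1"
    by (cases "all = 0") (simp_all add: divide_le_eq_1)
  ultimately show ?thesis unfolding p_mixed_m_def all mixed by simp
qed

end

theorem theorem2:
  fixes m n :: nat
    and M :: "complex mat measure"
    and \<eta> \<mu> :: "complex mat \<Rightarrow> real"
    and Pi_p Pi_m :: "complex mat"
  assumes m: "m \<ge> 1" and n: "n \<ge> 1"
    and space: "space M = density_ops m"
    and M_inv: "\<And>U. unitary_mat m U \<Longrightarrow>
                  (\<lambda>\<rho>. U * \<rho> * adj U) \<in> M \<rightarrow>\<^sub>M M \<and> distr M M (\<lambda>\<rho>. U * \<rho> * adj U) = M"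
    and mu_inv: "\<And>U \<rho>. unitary_mat m U \<Longrightarrow> \<rho> \<in> density_ops m \<Longrightarrow> \<mu> (U * \<rho> * adj U) = \<mu> \<rho>"
    and mu_pure: "\<And>\<rho>. \<rho> \<in> density_ops m \<Longrightarrow> \<mu> \<rho> = 1 \<longleftrightarrow> rank_one m \<rho>"
    and mu_range: "\<And>\<rho>. \<rho> \<in> density_ops m \<Longrightarrow> 0 \<le> \<mu> \<rho> \<and> \<mu> \<rho> \<le> 1"
    and mu_meas: "\<mu> \<in> borel_measurable M"
    and eta_nonneg: "\<And>\<rho>. \<rho> \<in> density_ops m \<Longrightarrow> \<eta> \<rho> \<ge> 0"
    and eta_inv: "\<And>U \<rho>. unitary_mat m U \<Longrightarrow> \<rho> \<in> density_ops m \<Longrightarrow> \<eta> (U * \<rho> * adj U) = \<eta> \<rho>"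
    and integrable: "\<And>A. A \<in> carrier_mat (m ^ n) (m ^ n) \<Longrightarrow>
                  integrable M (\<lambda>\<rho>. \<eta> \<rho> * Re (mtrace (tensor_pow m n \<rho> * A)))"
    and Pi_p: "is_orth_proj (m ^ n) (sym_subspace m n) Pi_p"
    and Pi_m: "is_orth_proj (m ^ n) (asym_subspace m n) Pi_m"
  shows "povm2 (m ^ n) Pi_p Pi_m \<and>
    (\<forall>Qp Qm. povm2 (m ^ n) Qp Qm \<longrightarrow>
       ((wint M \<eta> m n {\<rho>. \<mu> \<rho> \<le> 1} Qp \<noteq> 0 \<and> wint M \<eta> m n {\<rho>. \<mu> \<rho> \<le> 1} Pi_p \<noteq> 0
          \<longrightarrow> p_pure_p M \<eta> \<mu> m n Qp \<le> p_pure_p M \<eta> \<mu> m n Pi_p) \<and>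
        (wint M \<eta> m n {\<rho>. \<mu> \<rho> \<le> 1} Qm \<noteq> 0 \<and> wint M \<eta> m n {\<rho>. \<mu> \<rho> \<le> 1} Pi_m \<noteq> 0
          \<longrightarrow> p_mixed_m M \<eta> \<mu> m n Qm \<le> p_mixed_m M \<eta> \<mu> m n Pi_m)))"
proof -
  \<comment> \<open>The argument does not need \<open>n \<ge> 1\<close>.\<close>
  interpret purity_discrimination m n Pi_p Pi_m M \<eta> \<mu>
    using m Pi_p Pi_m space M_inv mu_inv mu_pure mu_range mu_meas eta_nonneg eta_inv integrable
    by unfold_locales auto
  show ?thesis using povm2_Pi p_pure_p_le p_mixed_m_le by (auto simp: povm2_def)
qed

end
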